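(* Let $H(z)$ be a function analytic at $0$ and let $A(z)=\sum_{n>0}a_nz^n$ be a formal power series whose coefficients satisfy \[ a_n \approx n^{\alpha n}\beta^n n^\gamma\,\tilde A(n^{-1}) \] for some $\alpha\in\mathbb{Z}_{>0}$, $\beta\in\mathbb{R}_{>0}$, $\gamma\in\mathbb{R}$ and nonzero formal power series $\tilde A(z)$. Define \[ \tilde A_j(z) = e^{-\alpha j}\beta^{-j} z^{\alpha j}(1-jz)^{\gamma-\alpha j}\, e^{\alpha z^{-1}(\log(1-jz)+jz)}\,\tilde A\!\left(\frac{z}{1-jz}\right), \qquad \tilde A_H(z) = \sum_{j\geq 0}\tilde A_j(z)\,[x^j]H'(A(x)). \] Then \[ [z^n]H(A(z)) \approx n^{\alpha n}\beta^n n^\gamma\,\tilde A_H(n^{-1}). \]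
   Context: For a formal power series $\tilde F(z)$, $f_n \approx b_n\tilde F(n^{-1})$ means that for every fixed $r\geq 0$, $f_n = b_n\big(\sum_{\ell=0}^{r-1}[z^\ell]\tilde F(z)\,n^{-\ell} + O(n^{-r})\big)$ as $n\to\infty$. $[x^j]F$ denotes the coefficient of $x^j$ in the formal power series $F$; $H(A(x))$ and $H'(A(x))$ are formal compositions (well defined since $A(0)=0$). The sum defining $\tilde A_H$ is a well-defined formal power series since $\tilde A_j(z)$ has valuation at least $\alpha j$. *)

theory Defs
  imports "HOL-Complex_Analysis.Complex_Analysis"
begin

definition asymp_fps :: "(nat \<Rightarrow> complex) \<Rightarrow> (nat \<Rightarrow> real) \<Rightarrow> complex fps \<Rightarrow> bool" where
  "asymp_fps f b F \<longleftrightarrow>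
     (\<forall>r::nat. (\<lambda>n. norm (f n - of_real (b n) *
                    (\<Sum>l<r. fps_nth F l * (1 / of_nat n) ^ l)))
               \<in> O(\<lambda>n. b n * (1 / real n) ^ r))"

definition scale :: "nat \<Rightarrow> real \<Rightarrow> real \<Rightarrow> nat \<Rightarrow> real" where
  "scale \<alpha> \<beta> \<gamma> n = real n ^ (\<alpha> * n) * \<beta> ^ n * real n powr \<gamma>"

definition At_j :: "nat \<Rightarrow> real \<Rightarrow> real \<Rightarrow> complex fps \<Rightarrow> nat \<Rightarrow> complex fps" where
  "At_j \<alpha> \<beta> \<gamma> At j =
     fps_const (of_real (exp (- real (\<alpha> * j)) * inverse \<beta> ^ j))
     * fps_X ^ (\<alpha> * j)
     * (fps_binomial (of_real (\<gamma> - real (\<alpha> * j))) oo (fps_const (- of_nat j) * fps_X))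
     * (fps_exp 1 oo (fps_const (of_nat \<alpha>) *
          fps_shift 1 ((fps_ln 1 oo (fps_const (- of_nat j) * fps_X)) + fps_const (of_nat j) * fps_X)))
     * (At oo (fps_X * inverse (1 - fps_const (of_nat j) * fps_X)))"

text \<open>Atilde_H(z) = sum_{j>=0} Atilde_j(z) [x^j] H'(A(x)); the coefficient of z^n only
  receives contributions from j <= n since Atilde_j has valuation >= alpha j >= j.\<close>
definition At_H :: "nat \<Rightarrow> real \<Rightarrow> real \<Rightarrow> complex fps \<Rightarrow> complex fps \<Rightarrow> complex fps \<Rightarrow> complex fps" where
  "At_H \<alpha> \<beta> \<gamma> At HF A =
     Abs_fps (\<lambda>n. \<Sum>j\<le>n. fps_nth (At_j \<alpha> \<beta> \<gamma> At j) n * fps_nth (fps_deriv HF oo A) j)"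

end

theory Submission
  imports Defs
begin

text \<open>Bender's method. Split \<open>A\<close> into its head, the polynomial of the terms of degree
  below \<open>R\<close>, and its tail, and expand \<open>H(head + tail)\<close> binomially. Since \<open>|a\<^sub>n|\<close> is bounded
  by a factorial majorant \<open>K \<mu>\<^sup>n ((n + p)!)\<^sup>\<alpha>\<close>, log-convexity of the factorial gives
  \<open>\<Sum>\<^sub>k\<^sub>=\<^sub>R\<^sup>n\<^sup>-\<^sup>R |a\<^sub>k a\<^sub>n\<^sub>-\<^sub>k| = O(a\<^sub>R a\<^sub>n\<^sub>-\<^sub>R)\<close>, and geometric factors are
  absorbed by factorial growth. Hence the terms free of the tail and those at least quadratic
  in it are \<open>O(a\<^sub>n\<^sub>-\<^sub>R)\<close>, while the terms linear in the tail give
  \<open>\<Sum>\<^sub>j\<^sub><\<^sub>R [x\<^sup>j] H'(A(x)) a\<^sub>n\<^sub>-\<^sub>j\<close> up to the same error.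

  Each shifted coefficient \<open>a\<^sub>n\<^sub>-\<^sub>j\<close> is expanded on the scale \<open>n\<^sup>\<alpha>\<^sup>n \<beta>\<^sup>n n\<^sup>\<gamma>\<close>: both the
  ratio of the scales at \<open>n - j\<close> and \<open>n\<close> and the substitution \<open>1/(n - j) = z/(1 - j z)\<close>
  are analytic functions of \<open>z = 1/n\<close>, and their Taylor expansions produce \<open>At_j\<close>.
  Choosing \<open>R\<close> large compared with the order \<open>r\<close> makes \<open>a\<^sub>n\<^sub>-\<^sub>R\<close> negligible.\<close>

section \<open>Factorial majorants\<close>

definition fact_majorant :: "real \<Rightarrow> real \<Rightarrow> nat \<Rightarrow> nat \<Rightarrow> nat \<Rightarrow> real" where
  "fact_majorant K \<mu> a p i = K * \<mu> ^ i * fact (i + p) ^ a"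

lemma fact_majorant_pos: "K > 0 \<Longrightarrow> \<mu> > 0 \<Longrightarrow> fact_majorant K \<mu> a p i > 0"
  unfolding fact_majorant_def by simp

lemma fact_majorant_Suc:
  "fact_majorant K \<mu> a p (Suc i) = fact_majorant K \<mu> a p i * \<mu> * real (Suc i + p) ^ a"
  unfolding fact_majorant_def by (simp add: power_mult_distrib)

lemma fact_majorant_mult:
  assumes "i \<le> n"
  shows "fact_majorant K \<mu> a p i * fact_majorant K \<mu> a p (n - i)
           = K\<^sup>2 * \<mu> ^ n * (fact (i + p) * fact (n - i + p)) ^ a"
proof -
  have "\<mu> ^ i * \<mu> ^ (n - i) = \<mu> ^ n"
    using assms by (simp add: power_add[symmetric])
  moreover have "fact_majorant K \<mu> a p i * fact_majorant K \<mu> a p (n - i)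
      = K\<^sup>2 * (\<mu> ^ i * \<mu> ^ (n - i)) * (fact (i + p) ^ a * fact (n - i + p) ^ a)"
    unfolding fact_majorant_def power2_eq_square by (simp only: mult_ac)
  ultimately show ?thesis by (simp add: power_mult_distrib)
qed

lemma sum_atMost_le_if_eventually_doubling:
  fixes u :: "nat \<Rightarrow> real"
  assumes pos: "\<And>y. u y > 0" and doubling: "\<And>y. y \<ge> m \<Longrightarrow> 2 * u y \<le> u (Suc y)"
  shows "\<exists>C>0. \<forall>Y. (\<Sum>y\<le>Y. u y) \<le> C * u Y"
proof -
  define C where "C = 2 + (\<Sum>Y\<le>m. (\<Sum>y\<le>Y. u y) / u Y)"
  have ratio_nonneg: "0 \<le> (\<Sum>y\<le>Y. u y) / u Y" for Y
    using pos by (intro divide_nonneg_pos sum_nonneg) (auto intro: less_imp_le)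
  have C: "C \<ge> 2"
    unfolding C_def using ratio_nonneg by (intro add_increasing2 sum_nonneg) auto
  have initial: "(\<Sum>y\<le>Y. u y) \<le> C * u Y" if "Y \<le> m" for Y
  proof -
    have "(\<Sum>y\<le>Y. u y) / u Y \<le> (\<Sum>Y\<le>m. (\<Sum>y\<le>Y. u y) / u Y)"
      using ratio_nonneg that by (intro member_le_sum) auto
    then have "(\<Sum>y\<le>Y. u y) / u Y \<le> C" unfolding C_def by linarith
    then show ?thesis using pos[of Y] by (simp add: divide_le_eq)
  qed
  have "(\<Sum>y\<le>Y. u y) \<le> C * u Y" for Y
  proof (induction Y)
    case 0
    then show ?case by (rule initial) simp
  next
    case (Suc Y)
    show ?case
    proof (cases "Suc Y \<le> m")
      case True
      then show ?thesis by (rule initial)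
    next
      case False
      then have "C * u Y \<le> (C/2) * u (Suc Y)"
        using doubling[of Y] C by (simp add: field_simps)
      then have "(\<Sum>y\<le>Suc Y. u y) \<le> (C/2) * u (Suc Y) + u (Suc Y)"
        using Suc.IH by simp
      also have "\<dots> \<le> C * u (Suc Y)"
        using C pos[of "Suc Y"] by (simp add: field_simps)
      finally show ?thesis .
    qed
  qed
  then show ?thesis using C by (intro exI[of _ C]) auto
qed

text \<open>Factorial growth beats every geometric rate \<open>c\<close>, so the sequence
  \<open>fact_majorant K \<mu> a p i / c ^ i\<close> is eventually doubling.\<close>
lemma fact_majorant_div_power_sum_le:
  assumes K: "K > 0" and \<mu>: "\<mu> > 0" and c: "c > 0" and a: "a \<ge> 1"
  shows "\<exists>C>0. \<forall>n (S::nat set) e. finite S \<longrightarrow> inj_on e S \<longrightarrow> (\<forall>x\<in>S. e x \<le> n) \<longrightarrow>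
            (\<Sum>x\<in>S. fact_majorant K \<mu> a p (e x) / c ^ e x) \<le> C * (fact_majorant K \<mu> a p n / c ^ n)"
proof -
  define u where "u y = fact_majorant K \<mu> a p y / c ^ y" for y
  have u_pos: "u y > 0" for y
    unfolding u_def using fact_majorant_pos[OF K \<mu>] c by simp
  have "2 * u y \<le> u (Suc y)" if y: "y \<ge> nat \<lceil>2 * c / \<mu>\<rceil>" for y
  proof -
    have "2 * c / \<mu> \<le> real y" using y by linarith
    then have "2 * c \<le> \<mu> * real (Suc y)" using \<mu> by (simp add: field_simps)
    also have "real (Suc y) \<le> real (Suc y + p) ^ a"
      using a by (intro order_trans[OF _ self_le_power]) auto
    finally have "2 * c \<le> \<mu> * real (Suc y + p) ^ a"
      using \<mu> by (simp add: mult_left_mono order_trans)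
    then have "(fact_majorant K \<mu> a p y / c ^ Suc y) * (2 * c)
               \<le> (fact_majorant K \<mu> a p y / c ^ Suc y) * (\<mu> * real (Suc y + p) ^ a)"
      using fact_majorant_pos[OF K \<mu>, of a p y] c by (intro mult_left_mono) auto
    then show ?thesis
      unfolding u_def fact_majorant_Suc using c by (simp add: field_simps)
  qed
  then obtain C where C: "C > 0" "\<And>Y. (\<Sum>y\<le>Y. u y) \<le> C * u Y"
    using sum_atMost_le_if_eventually_doubling[of u] u_pos by blast
  have "(\<Sum>x\<in>S. u (e x)) \<le> C * u n"
    if "finite S" "inj_on e S" "\<forall>x\<in>S. e x \<le> n" for n S e
  proof -
    have "(\<Sum>x\<in>S. u (e x)) = (\<Sum>y\<in>e ` S. u y)"
      using that by (simp add: sum.reindex)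
    also have "\<dots> \<le> (\<Sum>y\<le>n. u y)"
      using that u_pos by (intro sum_mono2) (auto intro: less_imp_le)
    finally show ?thesis using C(2)[of n] by linarith
  qed
  then show ?thesis using C(1) unfolding u_def by blast
qed

lemma power_le_fact_majorant:
  assumes K: "K > 0" and \<mu>: "\<mu> > 0" and c: "c > 0" and a: "a \<ge> 1"
  shows "\<exists>C>0. \<forall>n. c ^ n \<le> C * fact_majorant K \<mu> a p n"
proof -
  obtain C where C: "C > 0" and sum_le:
    "\<And>n (S::nat set) e. finite S \<Longrightarrow> inj_on e S \<Longrightarrow> (\<forall>x\<in>S. e x \<le> n) \<Longrightarrow>
       (\<Sum>x\<in>S. fact_majorant K \<mu> a p (e x) / c ^ e x) \<le> C * (fact_majorant K \<mu> a p n / c ^ n)"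
    using fact_majorant_div_power_sum_le[OF assms] by blast
  have "c ^ n \<le> C / fact_majorant K \<mu> a p 0 * fact_majorant K \<mu> a p n" for n
    using sum_le[of "{0}" "\<lambda>_. 0" n] c fact_majorant_pos[OF K \<mu>, of a p 0]
    by (simp add: field_simps)
  then show ?thesis
    using C fact_majorant_pos[OF K \<mu>, of a p 0] by (intro exI[of _ "C / fact_majorant K \<mu> a p 0"]) auto
qed

lemma fact_majorant_shift_sum_le:
  assumes K: "K > 0" and \<mu>: "\<mu> > 0" and E: "E > 0" and a: "a \<ge> 1" and R: "R \<ge> 1"
  shows "\<exists>C. \<forall>n (T::nat set). (\<forall>t\<in>T. 1 \<le> t \<and> t * R \<le> n) \<longrightarrow>
            (\<Sum>t\<in>T. E ^ (t * R) * fact_majorant K \<mu> a p (n - t * R)) \<le> C * fact_majorant K \<mu> a p (n - R)"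
proof -
  let ?f = "fact_majorant K \<mu> a p"
  obtain C where C: "C > 0" and sum_le:
    "\<And>n (S::nat set) e. finite S \<Longrightarrow> inj_on e S \<Longrightarrow> (\<forall>x\<in>S. e x \<le> n) \<Longrightarrow>
       (\<Sum>x\<in>S. ?f (e x) / E ^ e x) \<le> C * (?f n / E ^ n)"
    using fact_majorant_div_power_sum_le[OF K \<mu> E a] by blast
  have "(\<Sum>t\<in>T. E ^ (t * R) * ?f (n - t * R)) \<le> C * E ^ R * ?f (n - R)"
    if T: "\<forall>t\<in>T. 1 \<le> t \<and> t * R \<le> n" for n T
  proof (cases "T = {}")
    case True
    then show ?thesis using C E fact_majorant_pos[OF K \<mu>] by (simp add: less_imp_le)
  next
    case False
    define e where "e t = n - t * R" for t
    have t: "R \<le> t * R" "t * R \<le> n" if "t \<in> T" for t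
      using T that mult_le_mono1[of 1 t R] by auto
    from False obtain t0 where "t0 \<in> T" by blast
    with t have "R \<le> n" by (blast intro: le_trans)
    have "finite T"
    proof (rule finite_subset[of T "{..n}"])
      show "T \<subseteq> {..n}" using t le_trans[OF mult_le_mono2[OF R]] by auto
    qed simp
    moreover have "inj_on e T"
    proof (rule inj_onI)
      fix x y assume "x \<in> T" "y \<in> T" "e x = e y"
      then have "x * R = y * R" using t[of x] t[of y] unfolding e_def by linarith
      then show "x = y" using R by simp
    qed
    moreover have "\<forall>t\<in>T. e t \<le> n - R" unfolding e_def using t by (blast intro: diff_le_mono2)
    ultimately have sum_bound: "(\<Sum>t\<in>T. ?f (e t) / E ^ e t) \<le> C * (?f (n - R) / E ^ (n - R))"
      by (rule sum_le)
    have "(\<Sum>t\<in>T. E ^ (t * R) * ?f (e t)) = E ^ n * (\<Sum>t\<in>T. ?f (e t) / E ^ e t)"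
      unfolding sum_distrib_left
    proof (intro sum.cong refl)
      fix t assume "t \<in> T"
      then have "E ^ n = E ^ (t * R) * E ^ e t" using t unfolding e_def by (simp add: power_add[symmetric])
      then show "E ^ (t * R) * ?f (e t) = E ^ n * (?f (e t) / E ^ e t)" using E by simp
    qed
    also have "\<dots> \<le> E ^ n * (C * (?f (n - R) / E ^ (n - R)))"
      using sum_bound E by (intro mult_left_mono) auto
    also have "\<dots> = C * E ^ R * ?f (n - R)"
      using \<open>R \<le> n\<close> E by (simp add: power_diff field_simps)
    finally show ?thesis unfolding e_def .
  qed
  then show ?thesis by blast
qed

lemma fact_mult_fact_shift_le:
  "a + d \<le> b - d \<Longrightarrow> d \<le> b \<Longrightarrow>
     fact (a + d + p) * fact (b - d + p) \<le> (fact (a + p) * fact (b + p) :: nat)"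
proof (induction d)
  case 0
  then show ?case by simp
next
  case (Suc d)
  define b' where "b' = b - Suc d"
  have bd: "b - d = Suc b'" using Suc.prems unfolding b'_def by auto
  have "fact (a + Suc d + p) * fact (b - Suc d + p) = (a + d + p + 1) * (fact (a + d + p) * fact (b' + p))"
    unfolding b'_def by (simp add: algebra_simps)
  also have "\<dots> \<le> (b' + p + 1) * (fact (a + d + p) * fact (b' + p))"
    using Suc.prems unfolding b'_def by (intro mult_right_mono) auto
  also have "\<dots> = fact (a + d + p) * fact (b - d + p)"
    by (simp add: bd algebra_simps)
  also have "\<dots> \<le> fact (a + p) * fact (b + p)"
    using Suc bd by auto
  finally show ?case .
qed

lemma fact_mult_fact_le_endpoint:
  assumes "R \<le> i" "i \<le> n - R" "R \<le> n"
  shows "fact (i + p) * fact (n - i + p) \<le> (fact (R + p) * fact (n - R + p) :: real)"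
proof -
  have "fact (i + p) * fact (n - i + p) \<le> (fact (R + p) * fact (n - R + p) :: nat)"
  proof (cases "i \<le> n - i")
    case True
    have "fact (R + (i - R) + p) * fact ((n - R) - (i - R) + p) \<le> (fact (R + p) * fact (n - R + p) :: nat)"
      using assms True by (intro fact_mult_fact_shift_le) auto
    moreover have "R + (i - R) = i" "(n - R) - (i - R) = n - i" using assms by auto
    ultimately show ?thesis by simp
  next
    case False
    have "fact (R + (n - i - R) + p) * fact ((n - R) - (n - i - R) + p) \<le> (fact (R + p) * fact (n - R + p) :: nat)"
      using assms False by (intro fact_mult_fact_shift_le) auto
    moreover have "R + (n - i - R) = n - i" "(n - R) - (n - i - R) = i" using assms False by auto
    ultimately show ?thesis by (simp add: mult.commute)
  qed
  then have "real (fact (i + p) * fact (n - i + p)) \<le> real (fact (R + p) * fact (n - R + p))"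
    by (rule of_nat_mono)
  then show ?thesis by simp
qed

lemma fact_majorant_mult_inner_le:
  assumes a: "a \<ge> 1" and K: "K > 0" and \<mu>: "\<mu> > 0"
    and i: "R + 1 \<le> i" "i \<le> n - R - 1" and n: "R + 1 \<le> n - R"
  shows "fact_majorant K \<mu> a p i * fact_majorant K \<mu> a p (n - i)
           \<le> real (R + 1 + p) / real (n - R + p) * (fact_majorant K \<mu> a p R * fact_majorant K \<mu> a p (n - R))"
proof -
  define m where "m = n - (R + 1) + p"
  have m: "n - R + p = Suc m" using n unfolding m_def by simp
  define \<rho> where "\<rho> = real (R + 1 + p) / real (Suc m)"
  define F where "F = (fact (R + p) * fact (Suc m) :: real)"
  have \<rho>: "0 \<le> \<rho>" "\<rho> \<le> 1" unfolding \<rho>_def m_def using n by (auto simp: divide_le_eq)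
  have F: "F > 0" unfolding F_def by simp
  have "(fact (R + 1 + p) * fact m :: real) = F * \<rho>"
    unfolding F_def \<rho>_def by (simp add: field_simps del: of_nat_Suc)
  moreover have "fact (i + p) * fact (n - i + p) \<le> (fact (R + 1 + p) * fact (n - (R + 1) + p) :: real)"
    using i n by (intro fact_mult_fact_le_endpoint) auto
  ultimately have "(fact (i + p) * fact (n - i + p) :: real) ^ a \<le> (F * \<rho>) ^ a"
    unfolding m_def by (intro power_mono) auto
  also have "\<dots> \<le> F ^ a * \<rho>"
    using \<rho> F a power_decreasing[of 1 a \<rho>] by (simp add: power_mult_distrib mult_left_mono)
  finally have "K\<^sup>2 * \<mu> ^ n * (fact (i + p) * fact (n - i + p) :: real) ^ a \<le> K\<^sup>2 * \<mu> ^ n * (F ^ a * \<rho>)"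
    using K \<mu> by (intro mult_left_mono) auto
  moreover have "i \<le> n" "R \<le> n" using i n by auto
  ultimately show ?thesis
    unfolding F_def \<rho>_def m[symmetric] by (simp only: fact_majorant_mult) (simp add: mult_ac)
qed

lemma fact_majorant_mult_le_endpoint:
  assumes \<mu>: "\<mu> > 0" and i: "R \<le> i" "i \<le> n - R" and n: "R \<le> n"
  shows "fact_majorant K \<mu> a p i * fact_majorant K \<mu> a p (n - i)
           \<le> fact_majorant K \<mu> a p R * fact_majorant K \<mu> a p (n - R)"
proof -
  have "(fact (i + p) * fact (n - i + p) :: real) ^ a \<le> (fact (R + p) * fact (n - R + p)) ^ a"
    using i n by (intro power_mono fact_mult_fact_le_endpoint) auto
  then have "K\<^sup>2 * \<mu> ^ n * (fact (i + p) * fact (n - i + p) :: real) ^ a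
             \<le> K\<^sup>2 * \<mu> ^ n * (fact (R + p) * fact (n - R + p)) ^ a"
    using \<mu> by (intro mult_left_mono) auto
  moreover have "i \<le> n" using i n by linarith
  ultimately show ?thesis using n by (simp only: fact_majorant_mult)
qed

lemma fact_majorant_convolution_le:
  assumes K: "K > 0" and \<mu>: "\<mu> > 0" and a: "a \<ge> 1" and R: "R \<ge> 1" and n: "2 * R \<le> n"
  shows "(\<Sum>i\<in>{R..n-R}. fact_majorant K \<mu> a p i * fact_majorant K \<mu> a p (n - i))
           \<le> (2 + 4 * real (R + 1 + p)) * (fact_majorant K \<mu> a p R * fact_majorant K \<mu> a p (n - R))"
proof -
  define f where "f i = fact_majorant K \<mu> a p i * fact_majorant K \<mu> a p (n - i)" for i
  define B where "B = f R"
  define \<rho> where "\<rho> = real (R + 1 + p) / real (n - R + p)"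
  define S where "S = {R..n-R}"
  define T where "T = {R, n - R}"
  have B: "B \<ge> 0" unfolding B_def f_def using fact_majorant_pos[OF K \<mu>] by (simp add: less_imp_le)
  have \<rho>: "\<rho> \<ge> 0" unfolding \<rho>_def by simp
  have ends: "f i \<le> B" if "i \<in> S" for i
    using that n unfolding f_def B_def S_def by (intro fact_majorant_mult_le_endpoint[OF \<mu>]) auto
  have inner: "f i \<le> B * \<rho>" if "i \<in> S - T" for i
  proof -
    have "R + 1 \<le> i" "i \<le> n - R - 1" "R + 1 \<le> n - R" using that by (auto simp: S_def T_def)
    from fact_majorant_mult_inner_le[OF a K \<mu> this, of p] show ?thesis
      unfolding f_def B_def \<rho>_def by (simp only: mult.commute)
  qed
  have "(\<Sum>i\<in>S. f i) = (\<Sum>i\<in>S \<inter> T. f i) + (\<Sum>i\<in>S - T. f i)"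
    by (simp add: S_def sum.Int_Diff)
  also have "\<dots> \<le> real (card (S \<inter> T)) * B + real (card (S - T)) * (B * \<rho>)"
    using ends inner sum_mono[of "S \<inter> T" f "\<lambda>_. B"] sum_mono[of "S - T" f "\<lambda>_. B * \<rho>"]
    by (intro add_mono) auto
  also have "\<dots> \<le> 2 * B + real (n + 1) * (B * \<rho>)"
  proof (intro add_mono mult_right_mono)
    show "real (card (S \<inter> T)) \<le> 2"
      using card_mono[of T "S \<inter> T"] card_insert_le_m1[of 2 "{n - R}" R] unfolding T_def by auto
    show "real (card (S - T)) \<le> real (n + 1)"
      using card_mono[of S "S - T"] unfolding S_def by auto
  qed (use B \<rho> in auto)
  also have "real (n + 1) * (B * \<rho>) \<le> 4 * real (R + 1 + p) * B"
  proof -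
    have pos: "real (n - R + p) > 0" using n R by simp
    have "n + 1 \<le> 4 * (n - R + p)" using n R by arith
    then have "real (n + 1) * real (R + 1 + p) \<le> 4 * real (n - R + p) * real (R + 1 + p)"
      by (intro mult_right_mono) linarith+
    then have "real (n + 1) * \<rho> \<le> 4 * real (R + 1 + p)"
      unfolding \<rho>_def using pos by (simp add: field_simps)
    from mult_right_mono[OF this B] show ?thesis by (simp add: mult_ac)
  qed
  finally show ?thesis unfolding f_def B_def S_def by (simp add: algebra_simps)
qed

section \<open>Coefficients of powers\<close>

lemma geometric_sum_le_2:
  fixes x :: real
  assumes "0 \<le> x" "x \<le> 1/2"
  shows "(\<Sum>m<n. x ^ m) \<le> 2"
proof -
  have "(\<Sum>m<n. x ^ m) = (1 - x ^ n) / (1 - x)"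
    using assms by (simp add: sum_gp_strict)
  also have "\<dots> \<le> 1 / (1 - x)"
    using assms by (intro divide_right_mono) auto
  also have "\<dots> \<le> 2"
    using assms by (simp add: field_simps)
  finally show ?thesis .
qed

lemma geometric_sum_atLeastAtMost_le_2:
  fixes q :: real
  assumes "0 \<le> q" "q \<le> 1/2"
  shows "(\<Sum>m\<in>{k..n}. q ^ (m - k)) \<le> 2"
proof -
  have "(\<Sum>m\<in>{k..n}. q ^ (m - k)) = (\<Sum>y\<in>(\<lambda>m. m - k) ` {k..n}. q ^ y)"
    by (subst sum.reindex) (auto simp: inj_on_def)
  also have "\<dots> \<le> (\<Sum>y<Suc n. q ^ y)"
    using assms by (intro sum_mono2) auto
  also have "\<dots> \<le> 2"
    using assms by (rule geometric_sum_le_2)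
  finally show ?thesis .
qed

lemma sum_atLeastAtMost_triangle_swap:
  fixes f :: "nat \<Rightarrow> nat \<Rightarrow> 'a :: comm_monoid_add"
  shows "(\<Sum>m\<in>{0..n}. \<Sum>k\<in>{2..m}. f m k) = (\<Sum>k\<in>{2..n}. \<Sum>m\<in>{k..n}. f m k)"
proof -
  have "(\<Sum>m\<in>{0..n}. \<Sum>k\<in>{2..m}. f m k) = (\<Sum>m\<in>{0..n}. \<Sum>k\<in>{k\<in>{0..n}. 2 \<le> k \<and> k \<le> m}. f m k)"
    by (intro sum.cong refl) auto
  also have "\<dots> = (\<Sum>k\<in>{0..n}. \<Sum>m | m \<in> {0..n} \<and> 2 \<le> k \<and> k \<le> m. f m k)"
    by (rule sum.swap_restrict) auto
  also have "\<dots> = (\<Sum>k\<in>{0..n}. if 2 \<le> k then (\<Sum>m\<in>{k..n}. f m k) else 0)"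
    by (intro sum.cong refl) (auto intro!: sum.cong)
  also have "\<dots> = (\<Sum>k\<in>{2..n}. \<Sum>m\<in>{k..n}. f m k)"
    by (subst sum.inter_filter[symmetric]) (auto intro!: sum.cong)
  finally show ?thesis .
qed

lemma fps_nth_power_cutoff:
  fixes A :: "'a :: comm_semiring_1 fps"
  assumes "j < R"
  shows "(A ^ i) $ j = (fps_cutoff R A ^ i) $ j"
  using assms
proof (induction i arbitrary: j)
  case 0
  then show ?case by simp
next
  case (Suc i)
  have "(A ^ Suc i) $ j = (\<Sum>t=0..j. A $ t * (A ^ i) $ (j - t))"
    by (simp add: fps_mult_nth)
  also have "\<dots> = (\<Sum>t=0..j. fps_cutoff R A $ t * (fps_cutoff R A ^ i) $ (j - t))"
    using Suc by (intro sum.cong refl) (auto simp: fps_cutoff_nth)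
  also have "\<dots> = (fps_cutoff R A ^ Suc i) $ j"
    by (simp add: fps_mult_nth)
  finally show ?case .
qed

lemma fps_nth_bound_geometric:
  fixes F :: "'a :: {banach, real_normed_div_algebra} fps"
  assumes "fps_conv_radius F > 0"
  shows "\<exists>M>0. \<exists>w\<ge>1. \<forall>m. norm (F $ m) \<le> M * w ^ m"
proof -
  obtain \<rho> where \<rho>: "0 < ereal \<rho>" "ereal \<rho> < fps_conv_radius F"
    using ereal_dense2[OF assms] by blast
  define r where "r = min 1 \<rho>"
  have r: "r > 0" "r \<le> 1" using \<rho> unfolding r_def by auto
  have "ereal (norm (of_real r :: 'a)) < fps_conv_radius F"
    using \<rho> r unfolding r_def by (auto intro: le_less_trans[of _ "ereal \<rho>"])
  then have summable: "summable (\<lambda>n. norm (F $ n * of_real r ^ n))"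
    by (rule norm_summable_fps)
  define S where "S = (\<Sum>n. norm (F $ n * of_real r ^ n))"
  have "norm (F $ m) \<le> (S + 1) * (1 / r) ^ m" for m
  proof -
    have "(\<Sum>n\<in>{m}. norm (F $ n * of_real r ^ n)) \<le> S"
      unfolding S_def by (rule sum_le_suminf[OF summable]) auto
    then have "norm (F $ m) * r ^ m \<le> S" using r by (simp add: norm_mult norm_power)
    then have "norm (F $ m) \<le> S / r ^ m" using r by (simp add: field_simps)
    also have "\<dots> \<le> (S + 1) / r ^ m" using r by (simp add: divide_right_mono)
    finally show ?thesis by (simp add: power_divide)
  qed
  moreover have "S \<ge> 0" unfolding S_def by (intro suminf_nonneg summable) auto
  moreover have "1 / r \<ge> 1" using r by simp
  ultimately show ?thesis by (intro exI[of _ "S + 1"] conjI exI[of _ "1 / r"]) auto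
qed

lemma power_mult_binomial_le:
  fixes w h :: real
  assumes "w \<ge> 0" "h \<ge> 0" "k \<le> m"
  shows "w ^ m * real (m choose k) * h ^ (m - k) \<le> (2 * w) ^ k * (2 * w * h) ^ (m - k)"
proof -
  have "real (m choose k) \<le> 2 ^ m"
    using binomial_le_pow2[of m k] by (metis of_nat_le_iff of_nat_numeral of_nat_power)
  then have "w ^ m * real (m choose k) * h ^ (m - k) \<le> w ^ m * 2 ^ m * h ^ (m - k)"
    using assms by (intro mult_right_mono mult_left_mono) auto
  also have "w ^ m * 2 ^ m = (2 * w) ^ (k + (m - k))"
    using assms by (simp add: power_mult_distrib)
  finally show ?thesis by (simp only: power_add power_mult_distrib mult_ac)
qed

lemma norm_fps_nth_power_polynomial_le:
  fixes P :: "'a :: real_normed_div_algebra fps"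
  assumes \<tau>: "\<tau> > 0" and P: "\<And>j. j \<ge> R \<Longrightarrow> P $ j = 0"
  defines "\<pi> \<equiv> (\<Sum>j<R. norm (P $ j) * \<tau> ^ j)"
  shows "norm ((P ^ i) $ l) \<le> \<pi> ^ i / \<tau> ^ l"
proof (induction i arbitrary: l)
  case 0
  show ?case using \<tau> by (cases "l = 0") auto
next
  case (Suc i)
  have "(\<Sum>j=0..l. norm (P $ j) * \<tau> ^ j) \<le> \<pi>"
  proof -
    have "(\<Sum>j=0..l. norm (P $ j) * \<tau> ^ j) = (\<Sum>j\<in>{0..l} \<inter> {..<R}. norm (P $ j) * \<tau> ^ j)"
      using P by (intro sum.mono_neutral_right) auto
    also have "\<dots> \<le> \<pi>" unfolding \<pi>_def using \<tau> by (intro sum_mono2) auto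
    finally show ?thesis .
  qed
  moreover have "\<pi> \<ge> 0" unfolding \<pi>_def using \<tau> by (intro sum_nonneg) auto
  ultimately have bound: "(\<pi> ^ i / \<tau> ^ l) * (\<Sum>j=0..l. norm (P $ j) * \<tau> ^ j) \<le> (\<pi> ^ i / \<tau> ^ l) * \<pi>"
    using \<tau> by (intro mult_left_mono) auto
  have "norm ((P ^ Suc i) $ l) = norm (\<Sum>j=0..l. P $ j * (P ^ i) $ (l - j))"
    by (simp add: fps_mult_nth)
  also have "\<dots> \<le> (\<Sum>j=0..l. norm (P $ j) * (\<pi> ^ i / \<tau> ^ (l - j)))"
  proof (rule order_trans[OF norm_sum], intro sum_mono)
    fix j
    show "norm (P $ j * (P ^ i) $ (l - j)) \<le> norm (P $ j) * (\<pi> ^ i / \<tau> ^ (l - j))"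
      unfolding norm_mult by (intro mult_left_mono Suc.IH) auto
  qed
  also have "\<dots> = (\<pi> ^ i / \<tau> ^ l) * (\<Sum>j=0..l. norm (P $ j) * \<tau> ^ j)"
  proof -
    have "norm (P $ j) * (\<pi> ^ i / \<tau> ^ (l - j)) = (\<pi> ^ i / \<tau> ^ l) * (norm (P $ j) * \<tau> ^ j)"
      if "j \<in> {0..l}" for j
    proof -
      have "\<tau> ^ l = \<tau> ^ j * \<tau> ^ (l - j)" using that by (simp add: power_add[symmetric])
      then show ?thesis using \<tau> by (simp add: field_simps)
    qed
    then show ?thesis by (simp add: sum_distrib_left)
  qed
  finally show ?case using bound by (simp add: field_simps)
qed

lemma fact_majorant_shifted_convolution_le:
  assumes K: "K > 0" and \<mu>: "\<mu> > 0" and a: "a \<ge> 1" and R: "R \<ge> 1"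
    and x: "Suc (Suc k) * R \<le> x"
  shows "(\<Sum>i=0..x. if R \<le> i \<and> Suc k * R \<le> x - i
            then fact_majorant K \<mu> a p i * fact_majorant K \<mu> a p (x - i - k * R) else 0)
         \<le> (2 + 4 * real (R + 1 + p)) * fact_majorant K \<mu> a p R * fact_majorant K \<mu> a p (x - Suc k * R)"
proof -
  define y where "y = x - k * R"
  have y: "2 * R \<le> y" "y - R = x - Suc k * R" using x unfolding y_def by (auto simp: algebra_simps)
  have set: "{i\<in>{0..x}. R \<le> i \<and> Suc k * R \<le> x - i} = {R..y - R}"
    using x unfolding y_def by (auto simp: algebra_simps)
  have "(\<Sum>i=0..x. if R \<le> i \<and> Suc k * R \<le> x - i
               then fact_majorant K \<mu> a p i * fact_majorant K \<mu> a p (x - i - k * R) else 0)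
        = (\<Sum>i\<in>{i\<in>{0..x}. R \<le> i \<and> Suc k * R \<le> x - i}.
               fact_majorant K \<mu> a p i * fact_majorant K \<mu> a p (x - i - k * R))"
    by (rule sum.inter_filter[symmetric]) simp
  also have "\<dots> = (\<Sum>i\<in>{R..y - R}. fact_majorant K \<mu> a p i * fact_majorant K \<mu> a p (y - i))"
    unfolding set by (intro sum.cong refl) (simp only: y_def diff_commute[of x "k * R"])
  also have "\<dots> \<le> (2 + 4 * real (R + 1 + p)) * (fact_majorant K \<mu> a p R * fact_majorant K \<mu> a p (y - R))"
    using K \<mu> a R y(1) by (rule fact_majorant_convolution_le)
  finally show ?thesis by (simp add: y(2) mult.assoc)
qed

text \<open>Each extra factor costs the constant \<open>D\<close> and shifts the index of the majorant by \<open>R\<close>.\<close>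
lemma norm_fps_nth_power_le_if_valuation:
  fixes Q :: "'a :: real_normed_div_algebra fps"
  assumes K: "K > 0" and \<mu>: "\<mu> > 0" and a: "a \<ge> 1" and R: "R \<ge> 1"
    and Q: "\<And>i. norm (Q $ i) \<le> fact_majorant K \<mu> a p i"
    and Q0: "\<And>i. i < R \<Longrightarrow> Q $ i = 0"
  defines "D \<equiv> (2 + 4 * real (R + 1 + p)) * fact_majorant K \<mu> a p R"
  shows "norm ((Q ^ Suc k) $ x) \<le>
           (if Suc k * R \<le> x then D ^ k * fact_majorant K \<mu> a p (x - k * R) else 0)"
proof (induction k arbitrary: x)
  case 0
  show ?case using Q[of x] Q0[of x] by (cases "R \<le> x") auto
next
  case (Suc k)
  let ?f = "fact_majorant K \<mu> a p"
  have f: "?f i > 0" for i using fact_majorant_pos[OF K \<mu>] .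
  have D: "D > 0" unfolding D_def using f by (intro mult_pos_pos) auto
  have "norm ((Q ^ Suc (Suc k)) $ x) \<le> (\<Sum>i=0..x. norm (Q $ i) * norm ((Q ^ Suc k) $ (x - i)))"
    by (simp add: fps_mult_nth norm_mult[symmetric] norm_sum)
  also have "\<dots> \<le> (\<Sum>i=0..x. if R \<le> i \<and> Suc k * R \<le> x - i then ?f i * (D ^ k * ?f (x - i - k * R)) else 0)"
  proof (intro sum_mono)
    fix i
    show "norm (Q $ i) * norm ((Q ^ Suc k) $ (x - i))
          \<le> (if R \<le> i \<and> Suc k * R \<le> x - i then ?f i * (D ^ k * ?f (x - i - k * R)) else 0)"
      using Q[of i] Suc.IH[of "x - i"] Q0[of i] f[of i]
      by (cases "R \<le> i \<and> Suc k * R \<le> x - i") (auto intro: mult_mono split: if_splits)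
  qed
  also have "\<dots> \<le> (if Suc (Suc k) * R \<le> x then D ^ Suc k * ?f (x - Suc k * R) else 0)"
  proof (cases "Suc (Suc k) * R \<le> x")
    case True
    have "(\<Sum>i=0..x. if R \<le> i \<and> Suc k * R \<le> x - i then ?f i * (D ^ k * ?f (x - i - k * R)) else 0)
          = D ^ k * (\<Sum>i=0..x. if R \<le> i \<and> Suc k * R \<le> x - i then ?f i * ?f (x - i - k * R) else 0)"
      by (simp add: sum_distrib_left if_distrib mult_ac cong: if_cong)
    also have "\<dots> \<le> D ^ k * (D * ?f (x - Suc k * R))"
      using fact_majorant_shifted_convolution_le[OF K \<mu> a R True, of p] D
      unfolding D_def by (intro mult_left_mono) (auto simp: mult_ac)
    finally show ?thesis using True by (simp add: mult_ac)
  next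
    case False
    then have "(R \<le> i \<and> Suc k * R \<le> x - i) = False" for i by (auto simp: algebra_simps)
    then show ?thesis using False by (simp only: if_False sum.neutral_const)
  qed
  finally show ?case .
qed

section \<open>Bender's estimate for compositions\<close>

text \<open>The condition \<open>head_small\<close> makes the geometric series over the powers of the head
  converge.\<close>
locale fps_composition_estimate =
  fixes Hf A :: "'a :: real_normed_field fps"
    and M w K \<mu> c :: real and a p R :: nat
  assumes Hf_bound: "\<And>m. norm (Hf $ m) \<le> M * w ^ m" and M_pos: "M > 0" and w_ge_1: "w \<ge> 1"
    and A_0: "A $ 0 = 0" and A_bound: "\<And>i. norm (A $ i) \<le> fact_majorant K \<mu> a p i"
    and K_pos: "K > 0" and \<mu>_pos: "\<mu> > 0" and a_ge_1: "a \<ge> 1" and R_ge_1: "R \<ge> 1"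
    and c_pos: "c > 0" and head_small: "4 * w * (\<Sum>j<R. norm (A $ j) / c ^ j) \<le> 1"
begin

abbreviation maj :: "nat \<Rightarrow> real" where
  "maj \<equiv> fact_majorant K \<mu> a p"

lemma maj_pos: "maj i > 0"
  using K_pos \<mu>_pos by (rule fact_majorant_pos)

definition head :: "'a fps" where
  "head = fps_cutoff R A"

definition tail :: "'a fps" where
  "tail = A - head"

definition head_norm :: real where
  "head_norm = (\<Sum>j<R. norm (A $ j) / c ^ j)"

definition tail_factor :: real where
  "tail_factor = (2 + 4 * real (R + 1 + p)) * maj R"

definition tail_power_bound :: "nat \<Rightarrow> nat \<Rightarrow> real" where
  "tail_power_bound k i = (if k * R \<le> i then tail_factor ^ (k - 1) * maj (i - (k - 1) * R) else 0)"

lemma head_nth: "head $ i = (if i < R then A $ i else 0)"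
  by (simp add: head_def fps_cutoff_nth)

lemma tail_nth: "tail $ i = (if i < R then 0 else A $ i)"
  by (simp add: tail_def head_nth)

lemma head_norm_nonneg: "head_norm \<ge> 0"
  unfolding head_norm_def using c_pos by (intro sum_nonneg) auto

lemma tail_factor_pos: "tail_factor > 0"
  unfolding tail_factor_def using maj_pos by (intro mult_pos_pos) auto

lemma tail_power_bound_nonneg: "tail_power_bound k i \<ge> 0"
  unfolding tail_power_bound_def using tail_factor_pos maj_pos by (auto intro: less_imp_le)

lemma norm_head_power_nth_le: "norm ((head ^ i) $ j) \<le> head_norm ^ i * c ^ j"
proof -
  have "(\<Sum>j<R. norm (head $ j) * (1 / c) ^ j) = head_norm"
    unfolding head_norm_def by (intro sum.cong refl) (simp add: head_nth power_one_over)
  moreover have "norm ((head ^ i) $ j) \<le> (\<Sum>j<R. norm (head $ j) * (1 / c) ^ j) ^ i / (1 / c) ^ j"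
    using c_pos by (intro norm_fps_nth_power_polynomial_le) (auto simp: head_nth)
  ultimately show ?thesis by (simp add: power_one_over)
qed

lemma norm_tail_power_nth_le:
  assumes "k \<ge> 1"
  shows "norm ((tail ^ k) $ i) \<le> tail_power_bound k i"
proof -
  obtain k' where k: "k = Suc k'" using assms by (cases k) auto
  have "norm ((tail ^ Suc k') $ i) \<le> (if Suc k' * R \<le> i then tail_factor ^ k' * maj (i - k' * R) else 0)"
    unfolding tail_factor_def using K_pos \<mu>_pos a_ge_1 R_ge_1
    by (rule norm_fps_nth_power_le_if_valuation) (use A_bound maj_pos in \<open>auto simp: tail_nth intro: less_imp_le\<close>)
  then show ?thesis unfolding tail_power_bound_def k by (simp only: diff_Suc_1)
qed

definition tail_free_part :: "nat \<Rightarrow> 'a" where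
  "tail_free_part n = (\<Sum>m=0..n. Hf $ m * (head ^ m) $ n)"

definition one_tail_part :: "nat \<Rightarrow> 'a" where
  "one_tail_part n = (\<Sum>m=0..n. Hf $ m * of_nat m * (tail * head ^ (m - 1)) $ n)"

definition multi_tail_part :: "nat \<Rightarrow> 'a" where
  "multi_tail_part n =
     (\<Sum>m=0..n. Hf $ m * (\<Sum>k\<in>{2..m}. of_nat (m choose k) * (tail ^ k * head ^ (m - k)) $ n))"

lemma fps_compose_nth_split:
  "(Hf oo A) $ n = tail_free_part n + one_tail_part n + multi_tail_part n"
proof -
  define T where "T m k = of_nat (m choose k) * (tail ^ k * head ^ (m - k)) $ n" for m k
  have expand: "(A ^ m) $ n = (\<Sum>k\<le>m. T m k)" for m
  proof -
    have "A ^ m = (tail + head) ^ m" by (simp add: tail_def)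
    then show ?thesis unfolding binomial_ring T_def by (simp add: fps_sum_nth mult.assoc)
  qed
  have split: "(\<Sum>k\<le>m. T m k) = T m 0 + T m 1 + (\<Sum>k\<in>{2..m}. T m k)" for m
  proof (cases m)
    case 0
    then show ?thesis by (simp add: T_def)
  next
    case (Suc m')
    have "(\<Sum>k\<le>m. T m k) = (\<Sum>k\<in>{0..m}. T m k)"
      by (simp add: atLeast0AtMost)
    also have "\<dots> = T m 0 + (\<Sum>k\<in>{Suc 0..m}. T m k)"
      by (rule sum.atLeast_Suc_atMost) simp
    also have "(\<Sum>k\<in>{Suc 0..m}. T m k) = T m 1 + (\<Sum>k\<in>{Suc (Suc 0)..m}. T m k)"
      using Suc by (subst sum.atLeast_Suc_atMost) auto
    finally show ?thesis by (simp add: numeral_2_eq_2 add.assoc)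
  qed
  have "(Hf oo A) $ n = (\<Sum>m=0..n. Hf $ m * T m 0 + Hf $ m * T m 1 + Hf $ m * (\<Sum>k\<in>{2..m}. T m k))"
    unfolding fps_compose_nth expand split by (simp only: distrib_left)
  then show ?thesis
    unfolding tail_free_part_def one_tail_part_def multi_tail_part_def sum.distrib
    by (simp add: T_def mult.assoc)
qed

lemma tail_free_part_le: "\<exists>C. \<forall>n\<ge>R. norm (tail_free_part n) \<le> C * maj (n - R)"
proof -
  obtain C where C: "C > 0" "\<And>n. c ^ n \<le> C * maj n"
    using power_le_fact_majorant[OF K_pos \<mu>_pos c_pos a_ge_1] by blast
  have "norm (tail_free_part n) \<le> 2 * M * c ^ R * C * maj (n - R)" if n: "n \<ge> R" for n
  proof -
    have "norm (tail_free_part n) \<le> (\<Sum>m=0..n. (M * w ^ m) * (head_norm ^ m * c ^ n))"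
      unfolding tail_free_part_def
    proof (rule order_trans[OF norm_sum], intro sum_mono)
      fix m
      show "norm (Hf $ m * (head ^ m) $ n) \<le> (M * w ^ m) * (head_norm ^ m * c ^ n)"
        unfolding norm_mult using M_pos w_ge_1
        by (intro mult_mono Hf_bound norm_head_power_nth_le) auto
    qed
    also have "\<dots> = M * c ^ n * (\<Sum>m<Suc n. (w * head_norm) ^ m)"
      by (simp add: sum_distrib_left atLeast0AtMost lessThan_Suc_atMost power_mult_distrib algebra_simps)
    also have "\<dots> \<le> M * c ^ n * 2"
      using M_pos c_pos head_small[folded head_norm_def] head_norm_nonneg w_ge_1
      by (intro mult_left_mono geometric_sum_le_2) auto
    also have "c ^ n = c ^ R * c ^ (n - R)"
      using n by (simp add: power_add[symmetric])
    also have "M * (c ^ R * c ^ (n - R)) * 2 \<le> M * (c ^ R * (C * maj (n - R))) * 2"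
      using M_pos c_pos C(2) by (intro mult_right_mono mult_left_mono) auto
    finally show ?thesis by (simp add: mult_ac)
  qed
  then show ?thesis by blast
qed

text \<open>The coefficient of \<open>x\<^sup>j\<close> in \<open>H'(head(x))\<close>, with \<open>H'\<close> truncated to its terms of degree below \<open>n\<close>.\<close>
definition deriv_head_nth :: "nat \<Rightarrow> nat \<Rightarrow> 'a" where
  "deriv_head_nth n j = (\<Sum>i<n. Hf $ Suc i * of_nat (Suc i) * (head ^ i) $ j)"

lemma one_tail_part_eq: "one_tail_part n = (\<Sum>j=0..n. tail $ (n - j) * deriv_head_nth n j)"
proof -
  have "(tail * head ^ (m - 1)) $ n = (\<Sum>j=0..n. (head ^ (m - 1)) $ j * tail $ (n - j))" for m
    by (simp only: mult.commute[of tail] fps_mult_nth)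
  then have "one_tail_part n = (\<Sum>m=0..n. \<Sum>j=0..n. Hf $ m * of_nat m * (head ^ (m - 1)) $ j * tail $ (n - j))"
    unfolding one_tail_part_def by (simp add: sum_distrib_left mult.assoc)
  also have "\<dots> = (\<Sum>j=0..n. \<Sum>m=0..n. Hf $ m * of_nat m * (head ^ (m - 1)) $ j * tail $ (n - j))"
    by (rule sum.swap)
  also have "\<dots> = (\<Sum>j=0..n. tail $ (n - j) * deriv_head_nth n j)"
  proof (intro sum.cong refl)
    fix j
    have "(\<Sum>m=0..n. Hf $ m * of_nat m * (head ^ (m - 1)) $ j)
          = (\<Sum>m\<in>{Suc 0..n}. Hf $ m * of_nat m * (head ^ (m - 1)) $ j)"
      by (subst sum.atLeast_Suc_atMost) auto
    also have "\<dots> = deriv_head_nth n j"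
      unfolding deriv_head_nth_def by (subst sum.atLeast1_atMost_eq) (simp add: mult_ac)
    finally have "(\<Sum>m=0..n. Hf $ m * of_nat m * (head ^ (m - 1)) $ j) * tail $ (n - j)
                  = tail $ (n - j) * deriv_head_nth n j"
      by (simp only: mult.commute)
    then show "(\<Sum>m=0..n. Hf $ m * of_nat m * (head ^ (m - 1)) $ j * tail $ (n - j))
                  = tail $ (n - j) * deriv_head_nth n j"
      by (simp only: sum_distrib_right)
  qed
  finally show ?thesis .
qed

lemma deriv_head_nth_eq:
  assumes "j < R" "j < n"
  shows "deriv_head_nth n j = (fps_deriv Hf oo A) $ j"
proof -
  have head_0: "head $ 0 = 0" using A_0 by (simp add: head_nth)
  have "(fps_deriv Hf oo A) $ j = (\<Sum>i=0..j. of_nat (Suc i) * Hf $ Suc i * (A ^ i) $ j)"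
    by (simp add: fps_compose_nth)
  also have "\<dots> = (\<Sum>i=0..j. of_nat (Suc i) * Hf $ Suc i * (head ^ i) $ j)"
    by (intro sum.cong refl) (simp add: head_def fps_nth_power_cutoff[OF assms(1), of A])
  also have "\<dots> = deriv_head_nth n j"
    unfolding deriv_head_nth_def
  proof (intro sum.mono_neutral_cong_left)
    show "\<forall>i\<in>{..<n} - {0..j}. Hf $ Suc i * of_nat (Suc i) * (head ^ i) $ j = 0"
      using startsby_zero_power_prefix[OF head_0] by auto
  qed (use assms in \<open>auto simp: mult_ac\<close>)
  finally show ?thesis by simp
qed

lemma norm_deriv_head_nth_le: "norm (deriv_head_nth n j) \<le> 2 * M * w * c ^ j"
proof -
  have q: "0 \<le> 2 * w * head_norm" "2 * w * head_norm \<le> 1/2"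
    using head_norm_nonneg head_small[folded head_norm_def] w_ge_1 by auto
  have "norm (deriv_head_nth n j) \<le> (\<Sum>i<n. (M * w ^ Suc i) * real (Suc i) * (head_norm ^ i * c ^ j))"
    unfolding deriv_head_nth_def
  proof (rule order_trans[OF norm_sum], intro sum_mono)
    fix i
    show "norm (Hf $ Suc i * of_nat (Suc i) * (head ^ i) $ j) \<le> (M * w ^ Suc i) * real (Suc i) * (head_norm ^ i * c ^ j)"
      unfolding norm_mult norm_of_nat using M_pos w_ge_1
      by (intro mult_mono Hf_bound norm_head_power_nth_le order.refl) auto
  qed
  also have "\<dots> \<le> (\<Sum>i<n. M * w * c ^ j * (2 * w * head_norm) ^ i)"
  proof (intro sum_mono)
    fix i
    have "real (Suc i) \<le> 2 ^ i"
    proof -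
      have "Suc i \<le> 2 ^ i" by (induction i) auto
      then show ?thesis by (metis of_nat_le_iff of_nat_numeral of_nat_power)
    qed
    then have "real (Suc i) * (w ^ i * head_norm ^ i) \<le> 2 ^ i * (w ^ i * head_norm ^ i)"
      using w_ge_1 head_norm_nonneg by (intro mult_right_mono) auto
    then have "(M * w * c ^ j) * (real (Suc i) * (w ^ i * head_norm ^ i)) \<le> (M * w * c ^ j) * (2 * w * head_norm) ^ i"
      using M_pos w_ge_1 c_pos by (intro mult_left_mono) (auto simp: power_mult_distrib)
    then show "(M * w ^ Suc i) * real (Suc i) * (head_norm ^ i * c ^ j) \<le> M * w * c ^ j * (2 * w * head_norm) ^ i"
      by (simp add: algebra_simps)
  qed
  also have "\<dots> = M * w * c ^ j * (\<Sum>i<n. (2 * w * head_norm) ^ i)"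
    by (simp add: sum_distrib_left)
  also have "\<dots> \<le> M * w * c ^ j * 2"
    using M_pos w_ge_1 c_pos q by (intro mult_left_mono geometric_sum_le_2) auto
  finally show ?thesis by simp
qed

lemma one_tail_part_minus_eq:
  assumes n: "n \<ge> 2 * R"
  shows "one_tail_part n - (\<Sum>j<R. (fps_deriv Hf oo A) $ j * A $ (n - j))
           = (\<Sum>j\<in>{R..n}. tail $ (n - j) * deriv_head_nth n j)"
proof -
  have "(\<Sum>j<R. (fps_deriv Hf oo A) $ j * A $ (n - j)) = (\<Sum>j<R. tail $ (n - j) * deriv_head_nth n j)"
    using n R_ge_1 by (intro sum.cong refl) (auto simp: deriv_head_nth_eq tail_nth)
  moreover have "{0..n} = {..<R} \<union> {R..n}" using n by auto
  ultimately show ?thesis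
    unfolding one_tail_part_eq by (simp add: sum.union_disjoint ivl_disj_int)
qed

lemma one_tail_part_approx:
  "\<exists>C. \<forall>n\<ge>2*R. norm (one_tail_part n - (\<Sum>j<R. (fps_deriv Hf oo A) $ j * A $ (n - j))) \<le> C * maj (n - R)"
proof -
  obtain C where C: "C > 0" and sum_le:
    "\<And>n (S::nat set) e. finite S \<Longrightarrow> inj_on e S \<Longrightarrow> (\<forall>x\<in>S. e x \<le> n) \<Longrightarrow>
       (\<Sum>x\<in>S. maj (e x) / c ^ e x) \<le> C * (maj n / c ^ n)"
    using fact_majorant_div_power_sum_le[OF K_pos \<mu>_pos c_pos a_ge_1] by blast
  have "norm (one_tail_part n - (\<Sum>j<R. (fps_deriv Hf oo A) $ j * A $ (n - j)))
          \<le> 2 * M * w * C * c ^ R * maj (n - R)" if n: "n \<ge> 2 * R" for n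
  proof -
    have "norm (one_tail_part n - (\<Sum>j<R. (fps_deriv Hf oo A) $ j * A $ (n - j)))
          = norm (\<Sum>j\<in>{R..n}. tail $ (n - j) * deriv_head_nth n j)"
      using n by (simp only: one_tail_part_minus_eq)
    also have "\<dots> \<le> (\<Sum>j\<in>{R..n}. maj (n - j) * (2 * M * w * c ^ j))"
    proof (rule order_trans[OF norm_sum], intro sum_mono)
      fix j
      have "norm (tail $ (n - j)) \<le> maj (n - j)"
        using A_bound maj_pos[of "n - j"] by (simp add: tail_nth less_imp_le)
      then show "norm (tail $ (n - j) * deriv_head_nth n j) \<le> maj (n - j) * (2 * M * w * c ^ j)"
        unfolding norm_mult using maj_pos[of "n - j"]
        by (intro mult_mono norm_deriv_head_nth_le) auto
    qed
    also have "\<dots> = 2 * M * w * c ^ n * (\<Sum>j\<in>{R..n}. maj (n - j) / c ^ (n - j))"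
    proof -
      have "maj (n - j) * (2 * M * w * c ^ j) = 2 * M * w * c ^ n * (maj (n - j) / c ^ (n - j))"
        if "j \<in> {R..n}" for j
      proof -
        have "c ^ n = c ^ j * c ^ (n - j)" using that by (simp add: power_add[symmetric])
        then show ?thesis using c_pos by (simp add: field_simps)
      qed
      then show ?thesis by (simp add: sum_distrib_left)
    qed
    also have "\<dots> \<le> 2 * M * w * c ^ n * (C * (maj (n - R) / c ^ (n - R)))"
    proof -
      have "inj_on (\<lambda>j. n - j) {R..n}" by (auto simp: inj_on_def)
      then have "(\<Sum>j\<in>{R..n}. maj (n - j) / c ^ (n - j)) \<le> C * (maj (n - R) / c ^ (n - R))"
        by (intro sum_le) auto
      then show ?thesis using M_pos w_ge_1 c_pos by (intro mult_left_mono) auto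
    qed
    also have "\<dots> = 2 * M * w * C * c ^ R * maj (n - R)"
    proof -
      have "c ^ n = c ^ R * c ^ (n - R)" using n by (simp add: power_add[symmetric])
      then show ?thesis using c_pos by (simp add: field_simps)
    qed
    finally show ?thesis .
  qed
  then show ?thesis by blast
qed

text \<open>Multiplying a power of the tail by head factors only costs the geometric factor
  \<open>c\<close> per index, which the factorial growth of \<open>maj\<close> absorbs.\<close>
lemma tail_power_bound_convolution_le:
  "\<exists>C>0. \<forall>k n. (\<Sum>i=0..n. tail_power_bound k i * c ^ (n - i)) \<le> C * tail_power_bound k n"
proof -
  obtain C where C: "C > 0" and sum_le:
    "\<And>n (S::nat set) e. finite S \<Longrightarrow> inj_on e S \<Longrightarrow> (\<forall>x\<in>S. e x \<le> n) \<Longrightarrow>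
       (\<Sum>x\<in>S. maj (e x) / c ^ e x) \<le> C * (maj n / c ^ n)"
    using fact_majorant_div_power_sum_le[OF K_pos \<mu>_pos c_pos a_ge_1] by blast
  have "(\<Sum>i=0..n. tail_power_bound k i * c ^ (n - i)) \<le> C * tail_power_bound k n" for k n
  proof (cases "k * R \<le> n")
    case False
    then have "tail_power_bound k i = 0" if "i \<le> n" for i
      using that by (simp add: tail_power_bound_def)
    then show ?thesis using False by (simp add: tail_power_bound_def)
  next
    case True
    define s where "s = (k - 1) * R"
    have s: "s \<le> k * R" unfolding s_def by (simp add: mult_le_mono1)
    have "(\<Sum>i=0..n. tail_power_bound k i * c ^ (n - i)) = (\<Sum>i\<in>{k*R..n}. tail_power_bound k i * c ^ (n - i))"
      by (intro sum.mono_neutral_right) (auto simp: tail_power_bound_def)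
    also have "\<dots> = tail_factor ^ (k - 1) * c ^ (n - s) * (\<Sum>i\<in>{k*R..n}. maj (i - s) / c ^ (i - s))"
    proof -
      have "c ^ (n - s) = c ^ (i - s) * c ^ (n - i)" if "i \<in> {k*R..n}" for i
        using that s by (simp add: power_add[symmetric])
      then show ?thesis
        using c_pos by (simp add: tail_power_bound_def sum_distrib_left s_def field_simps)
    qed
    also have "\<dots> \<le> tail_factor ^ (k - 1) * c ^ (n - s) * (C * (maj (n - s) / c ^ (n - s)))"
    proof -
      have "inj_on (\<lambda>i. i - s) {k*R..n}" using s by (auto simp: inj_on_def)
      then have "(\<Sum>i\<in>{k*R..n}. maj (i - s) / c ^ (i - s)) \<le> C * (maj (n - s) / c ^ (n - s))"
        by (intro sum_le) auto
      then show ?thesis using tail_factor_pos c_pos by (intro mult_left_mono) auto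
    qed
    also have "\<dots> = C * tail_power_bound k n"
      using True c_pos by (simp add: tail_power_bound_def s_def)
    finally show ?thesis .
  qed
  then show ?thesis using C by blast
qed

lemma norm_tail_power_head_power_nth_le:
  "\<exists>C>0. \<forall>k j n. k \<ge> 1 \<longrightarrow>
     norm ((tail ^ k * head ^ j) $ n) \<le> C * head_norm ^ j * tail_power_bound k n"
proof -
  obtain C where C: "C > 0" "\<And>k n. (\<Sum>i=0..n. tail_power_bound k i * c ^ (n - i)) \<le> C * tail_power_bound k n"
    using tail_power_bound_convolution_le by blast
  have "norm ((tail ^ k * head ^ j) $ n) \<le> C * head_norm ^ j * tail_power_bound k n"
    if k: "k \<ge> 1" for k j n
  proof -
    have "norm ((tail ^ k * head ^ j) $ n) \<le> (\<Sum>i=0..n. tail_power_bound k i * (head_norm ^ j * c ^ (n - i)))"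
      unfolding fps_mult_nth
    proof (rule order_trans[OF norm_sum], intro sum_mono)
      fix i
      show "norm ((tail ^ k) $ i * (head ^ j) $ (n - i)) \<le> tail_power_bound k i * (head_norm ^ j * c ^ (n - i))"
        unfolding norm_mult using k tail_power_bound_nonneg
        by (intro mult_mono norm_tail_power_nth_le norm_head_power_nth_le) auto
    qed
    also have "\<dots> = head_norm ^ j * (\<Sum>i=0..n. tail_power_bound k i * c ^ (n - i))"
      by (simp add: sum_distrib_left mult_ac)
    also have "\<dots> \<le> head_norm ^ j * (C * tail_power_bound k n)"
      using C(2) head_norm_nonneg by (intro mult_left_mono) auto
    finally show ?thesis by (simp add: mult_ac)
  qed
  then show ?thesis using C(1) by blast
qed

lemma norm_multi_tail_part_le:
  "\<exists>C>0. \<forall>n. norm (multi_tail_part n) \<le> C * (\<Sum>k\<in>{2..n}. (2 * w) ^ k * tail_power_bound k n)"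
proof -
  obtain C where C: "C > 0"
    "\<And>k j n. k \<ge> 1 \<Longrightarrow> norm ((tail ^ k * head ^ j) $ n) \<le> C * head_norm ^ j * tail_power_bound k n"
    using norm_tail_power_head_power_nth_le by blast
  define q where "q = 2 * w * head_norm"
  have q: "0 \<le> q" "q \<le> 1/2"
    unfolding q_def using head_norm_nonneg head_small[folded head_norm_def] w_ge_1 by auto
  have "norm (multi_tail_part n) \<le> 2 * M * C * (\<Sum>k\<in>{2..n}. (2 * w) ^ k * tail_power_bound k n)" for n
  proof -
    have "norm (multi_tail_part n) \<le> (\<Sum>m=0..n. \<Sum>k\<in>{2..m}. M * C * (2 * w) ^ k * q ^ (m - k) * tail_power_bound k n)"
      unfolding multi_tail_part_def
    proof (rule order_trans[OF norm_sum], intro sum_mono)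
      fix m
      have "norm (\<Sum>k\<in>{2..m}. of_nat (m choose k) * (tail ^ k * head ^ (m - k)) $ n)
            \<le> (\<Sum>k\<in>{2..m}. real (m choose k) * (C * head_norm ^ (m - k) * tail_power_bound k n))"
      proof (rule order_trans[OF norm_sum], intro sum_mono)
        fix k assume "k \<in> {2..m}"
        then show "norm (of_nat (m choose k) * (tail ^ k * head ^ (m - k)) $ n)
                   \<le> real (m choose k) * (C * head_norm ^ (m - k) * tail_power_bound k n)"
          unfolding norm_mult norm_of_nat by (intro mult_left_mono C(2)) auto
      qed
      then have "norm (Hf $ m * (\<Sum>k\<in>{2..m}. of_nat (m choose k) * (tail ^ k * head ^ (m - k)) $ n))
            \<le> (M * w ^ m) * (\<Sum>k\<in>{2..m}. real (m choose k) * (C * head_norm ^ (m - k) * tail_power_bound k n))"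
        unfolding norm_mult using M_pos w_ge_1 by (intro mult_mono Hf_bound) auto
      also have "\<dots> = (\<Sum>k\<in>{2..m}. M * C * (w ^ m * real (m choose k) * head_norm ^ (m - k)) * tail_power_bound k n)"
        by (simp add: sum_distrib_left mult_ac)
      also have "\<dots> \<le> (\<Sum>k\<in>{2..m}. M * C * ((2 * w) ^ k * q ^ (m - k)) * tail_power_bound k n)"
        unfolding q_def using w_ge_1 head_norm_nonneg M_pos C(1)
        by (intro sum_mono mult_right_mono mult_left_mono tail_power_bound_nonneg power_mult_binomial_le) auto
      finally show "norm (Hf $ m * (\<Sum>k\<in>{2..m}. of_nat (m choose k) * (tail ^ k * head ^ (m - k)) $ n))
            \<le> (\<Sum>k\<in>{2..m}. M * C * (2 * w) ^ k * q ^ (m - k) * tail_power_bound k n)"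
        by (simp add: mult_ac)
    qed
    also have "\<dots> = (\<Sum>k\<in>{2..n}. \<Sum>m\<in>{k..n}. M * C * (2 * w) ^ k * q ^ (m - k) * tail_power_bound k n)"
      by (rule sum_atLeastAtMost_triangle_swap)
    also have "\<dots> = (\<Sum>k\<in>{2..n}. M * C * (2 * w) ^ k * tail_power_bound k n * (\<Sum>m\<in>{k..n}. q ^ (m - k)))"
      by (simp add: sum_distrib_left mult_ac)
    also have "\<dots> \<le> (\<Sum>k\<in>{2..n}. M * C * (2 * w) ^ k * tail_power_bound k n * 2)"
      using M_pos C(1) w_ge_1 tail_power_bound_nonneg q
      by (intro sum_mono mult_left_mono geometric_sum_atLeastAtMost_le_2) auto
    also have "\<dots> = 2 * M * C * (\<Sum>k\<in>{2..n}. (2 * w) ^ k * tail_power_bound k n)"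
      by (simp add: sum_distrib_left mult_ac)
    finally show ?thesis .
  qed
  then show ?thesis using M_pos C(1) by (intro exI[of _ "2 * M * C"]) auto
qed

lemma tail_power_bound_sum_le:
  "\<exists>C. \<forall>n\<ge>R. (\<Sum>k\<in>{2..n}. (2 * w) ^ k * tail_power_bound k n) \<le> C * maj (n - R)"
proof -
  define E where "E = max 1 (2 * w * tail_factor)"
  have E: "E \<ge> 1" "E > 0" unfolding E_def by auto
  obtain C where C: "\<And>n (T::nat set). \<forall>t\<in>T. 1 \<le> t \<and> t * R \<le> n \<Longrightarrow>
      (\<Sum>t\<in>T. E ^ (t * R) * maj (n - t * R)) \<le> C * maj (n - R)"
    using fact_majorant_shift_sum_le[OF K_pos \<mu>_pos E(2) a_ge_1 R_ge_1] by blast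
  have "(\<Sum>k\<in>{2..n}. (2 * w) ^ k * tail_power_bound k n) \<le> 2 * w * C * maj (n - R)" for n
  proof -
    define S where "S = {k\<in>{2..n}. k * R \<le> n}"
    have "(\<Sum>k\<in>{2..n}. (2 * w) ^ k * tail_power_bound k n)
          = (\<Sum>k\<in>{2..n}. if k * R \<le> n then (2 * w) ^ k * tail_factor ^ (k - 1) * maj (n - (k - 1) * R) else 0)"
      unfolding tail_power_bound_def by (intro sum.cong refl) simp
    also have "\<dots> = (\<Sum>k\<in>S. (2 * w) ^ k * tail_factor ^ (k - 1) * maj (n - (k - 1) * R))"
      unfolding S_def by (rule sum.inter_filter[symmetric]) simp
    also have "\<dots> \<le> (\<Sum>k\<in>S. 2 * w * (E ^ ((k - 1) * R) * maj (n - (k - 1) * R)))"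
    proof (intro sum_mono)
      fix k assume k: "k \<in> S"
      have "(2 * w) ^ k * tail_factor ^ (k - 1) = 2 * w * (2 * w * tail_factor) ^ (k - 1)"
        using k unfolding S_def by (cases k) (auto simp: power_mult_distrib)
      also have "\<dots> \<le> 2 * w * E ^ ((k - 1) * R)"
        using w_ge_1 tail_factor_pos E R_ge_1 unfolding E_def
        by (intro mult_left_mono order_trans[OF power_mono power_increasing]) auto
      finally show "(2 * w) ^ k * tail_factor ^ (k - 1) * maj (n - (k - 1) * R)
                    \<le> 2 * w * (E ^ ((k - 1) * R) * maj (n - (k - 1) * R))"
        using maj_pos[of "n - (k - 1) * R"] by (simp add: mult_right_mono mult.assoc)
    qed
    also have "\<dots> = 2 * w * (\<Sum>t\<in>(\<lambda>k. k - 1) ` S. E ^ (t * R) * maj (n - t * R))"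
      by (subst sum.reindex) (auto simp: inj_on_def S_def sum_distrib_left)
    also have "\<dots> \<le> 2 * w * (C * maj (n - R))"
    proof (intro mult_left_mono C ballI)
      fix t assume "t \<in> (\<lambda>k. k - 1) ` S"
      then obtain k where k: "k \<in> S" "t = k - 1" by blast
      have "t * R \<le> k * R" unfolding k(2) by (rule mult_le_mono1) simp
      also have "k * R \<le> n" using k(1) unfolding S_def by simp
      finally show "1 \<le> t \<and> t * R \<le> n" using k unfolding S_def by auto
    qed (use w_ge_1 in auto)
    finally show ?thesis by (simp add: mult_ac)
  qed
  then show ?thesis by blast
qed

lemma multi_tail_part_le: "\<exists>C. \<forall>n\<ge>R. norm (multi_tail_part n) \<le> C * maj (n - R)"
proof -
  obtain C1 where C1: "C1 > 0" "\<And>n. norm (multi_tail_part n) \<le> C1 * (\<Sum>k\<in>{2..n}. (2 * w) ^ k * tail_power_bound k n)"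
    using norm_multi_tail_part_le by blast
  obtain C2 where C2: "\<And>n. n \<ge> R \<Longrightarrow> (\<Sum>k\<in>{2..n}. (2 * w) ^ k * tail_power_bound k n) \<le> C2 * maj (n - R)"
    using tail_power_bound_sum_le by blast
  have "norm (multi_tail_part n) \<le> (C1 * C2) * maj (n - R)" if "n \<ge> R" for n
    using order_trans[OF C1(2) mult_left_mono[OF C2[OF that] less_imp_le[OF C1(1)]]] by (simp add: mult_ac)
  then show ?thesis by blast
qed

text \<open>Only the terms of \<open>H(A)\<close> that are linear in the tail of \<open>A\<close>
  contribute beyond the order of \<open>a\<^sub>n\<^sub>-\<^sub>R\<close>.\<close>
theorem compose_nth_approx:
  "\<exists>C. \<forall>n\<ge>2*R. norm ((Hf oo A) $ n - (\<Sum>j<R. (fps_deriv Hf oo A) $ j * A $ (n - j))) \<le> C * maj (n - R)"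
proof -
  obtain C0 where C0: "\<And>n. n \<ge> R \<Longrightarrow> norm (tail_free_part n) \<le> C0 * maj (n - R)"
    using tail_free_part_le by blast
  obtain C1 where C1: "\<And>n. n \<ge> 2 * R \<Longrightarrow>
      norm (one_tail_part n - (\<Sum>j<R. (fps_deriv Hf oo A) $ j * A $ (n - j))) \<le> C1 * maj (n - R)"
    using one_tail_part_approx by blast
  obtain C2 where C2: "\<And>n. n \<ge> R \<Longrightarrow> norm (multi_tail_part n) \<le> C2 * maj (n - R)"
    using multi_tail_part_le by blast
  have "norm ((Hf oo A) $ n - (\<Sum>j<R. (fps_deriv Hf oo A) $ j * A $ (n - j))) \<le> (C0 + C1 + C2) * maj (n - R)"
    if n: "n \<ge> 2 * R" for n
  proof -
    have "(Hf oo A) $ n - (\<Sum>j<R. (fps_deriv Hf oo A) $ j * A $ (n - j))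
          = tail_free_part n + (one_tail_part n - (\<Sum>j<R. (fps_deriv Hf oo A) $ j * A $ (n - j))) + multi_tail_part n"
      by (simp add: fps_compose_nth_split algebra_simps)
    also have "norm \<dots> \<le> C0 * maj (n - R) + C1 * maj (n - R) + C2 * maj (n - R)"
      using C0 C1 C2 n by (intro norm_triangle_le add_mono norm_triangle_ineq) auto
    finally show ?thesis by (simp add: algebra_simps)
  qed
  then show ?thesis by blast
qed

end

lemma fps_compose_nth_approx:
  fixes Hf A :: "'a :: real_normed_field fps"
  assumes Hf: "\<And>m. norm (Hf $ m) \<le> M * w ^ m" and M: "M > 0" and w: "w \<ge> 1"
    and A_0: "A $ 0 = 0" and A: "\<And>i. norm (A $ i) \<le> fact_majorant K \<mu> a p i"
    and K: "K > 0" and \<mu>: "\<mu> > 0" and a: "a \<ge> 1" and R: "R \<ge> 1"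
  shows "\<exists>C. \<forall>n\<ge>2*R. norm ((Hf oo A) $ n - (\<Sum>j<R. (fps_deriv Hf oo A) $ j * A $ (n - j)))
                      \<le> C * fact_majorant K \<mu> a p (n - R)"
proof -
  define S where "S = (\<Sum>j<R. norm (A $ j))"
  define c where "c = 4 * w * (1 + S)"
  have S: "S \<ge> 0" unfolding S_def by (intro sum_nonneg) auto
  have c: "c \<ge> 1" unfolding c_def using mult_mono[of 1 w 1 "1 + S"] S w by simp
  have "norm (A $ j) / c ^ j \<le> norm (A $ j) / c" for j
    using A_0 c by (cases j) (auto intro!: divide_left_mono simp: mult_pos_pos)
  then have "(\<Sum>j<R. norm (A $ j) / c ^ j) \<le> S / c"
    unfolding S_def sum_divide_distrib by (rule sum_mono)
  then have "4 * w * (\<Sum>j<R. norm (A $ j) / c ^ j) \<le> 4 * w * (S / c)"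
    using w by (intro mult_left_mono) auto
  also have "\<dots> \<le> 1"
  proof -
    have "4 * w * S \<le> c" unfolding c_def using w by (simp add: algebra_simps)
    then show ?thesis using c by (simp add: field_simps)
  qed
  finally interpret fps_composition_estimate Hf A M w K \<mu> c a p R
    using assms c by unfold_locales auto
  show ?thesis by (rule compose_nth_approx)
qed

section \<open>Factorial majorants versus the scale\<close>

lemma scale_pos: "\<beta> > 0 \<Longrightarrow> n \<ge> 1 \<Longrightarrow> scale \<alpha> \<beta> \<gamma> n > 0"
  unfolding scale_def by simp

lemma scale_nonneg: "\<beta> > 0 \<Longrightarrow> scale \<alpha> \<beta> \<gamma> n \<ge> 0"
  unfolding scale_def by simp

lemma power_div_fact_le_exp:
  fixes x :: real
  assumes "x \<ge> 0"
  shows "x ^ n / fact n \<le> exp x"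
proof -
  have sums: "(\<lambda>k. x ^ k / fact k) sums exp x"
    using exp_converges[of x] by (simp add: divide_inverse mult.commute scaleR_conv_of_real)
  have "(\<Sum>k\<in>{n}. x ^ k / fact k) \<le> (\<Sum>k. x ^ k / fact k)"
    using assms by (intro sum_le_suminf sums_summable[OF sums]) auto
  then show ?thesis using sums_unique[OF sums] by simp
qed

lemma exp_le_one_plus_inverse_power:
  assumes "k \<ge> 1"
  shows "exp 1 \<le> (1 + 1 / real k) ^ (k + 1)"
proof -
  define x where "x = 1 + 1 / real k"
  have x: "x > 0" unfolding x_def by (simp add: add_pos_nonneg)
  have "ln (1 / x) \<le> 1 / x - 1" using x by (intro ln_le_minus_one) auto
  then have "1 - 1 / x \<le> ln x" using x by (simp add: ln_div)
  moreover have "1 - 1 / x = 1 / real (k + 1)" unfolding x_def using assms by (simp add: field_simps)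
  ultimately have "1 \<le> real (k + 1) * ln x" using assms by (simp add: field_simps)
  then have "exp 1 \<le> exp (real (k + 1) * ln x)" by simp
  also have "\<dots> = exp (ln x) ^ (k + 1)" by (rule exp_of_nat_mult)
  also have "\<dots> = x ^ (k + 1)" using x by simp
  finally show ?thesis unfolding x_def .
qed

lemma fact_mult_exp_le: "fact m * exp (real m) \<le> real (m + 1) ^ (m + 1)"
proof (induction m)
  case 0
  then show ?case by simp
next
  case (Suc m)
  have "fact (Suc m) * exp (real (Suc m)) = real (m + 1) * (fact m * exp (real m)) * exp 1"
    by (simp add: exp_add[symmetric] algebra_simps)
  also have "\<dots> \<le> real (m + 1) * real (m + 1) ^ (m + 1) * (1 + 1 / real (m + 1)) ^ (m + 2)"
    using Suc exp_le_one_plus_inverse_power[of "m + 1"]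
    by (intro mult_mono mult_left_mono) (auto simp del: of_nat_Suc of_nat_add simp: numeral_2_eq_2)
  also have "\<dots> = real (m + 2) ^ (m + 2)"
  proof -
    have "1 + 1 / real (m + 1) = real (m + 2) / real (m + 1)" by (simp add: field_simps)
    then have "(1 + 1 / real (m + 1)) ^ (m + 2) = real (m + 2) ^ (m + 2) / real (m + 1) ^ (m + 2)"
      by (simp add: power_divide)
    moreover have "real (m + 1) * real (m + 1) ^ (m + 1) = real (m + 1) ^ (m + 2)"
      by (simp add: numeral_2_eq_2)
    ultimately show ?thesis by simp
  qed
  finally show ?case by simp
qed

lemma fact_mult_power_le_fact_add: "fact i * real i ^ p \<le> (fact (i + p) :: real)"
proof (induction p)
  case 0
  then show ?case by simp
next
  case (Suc p)
  have "fact i * real i ^ Suc p = (fact i * real i ^ p) * real i" by (simp add: algebra_simps)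
  also have "\<dots> \<le> fact (i + p) * real (Suc (i + p))"
    using Suc by (intro mult_mono) auto
  also have "\<dots> = fact (i + Suc p)" by (simp add: algebra_simps)
  finally show ?case .
qed

lemma scale_le_fact_majorant:
  assumes \<alpha>: "\<alpha> \<ge> 1" and \<beta>: "\<beta> > 0" and i: "i \<ge> 1" and p: "\<gamma> \<le> real p"
  shows "scale \<alpha> \<beta> \<gamma> i \<le> fact_majorant 1 (exp (real \<alpha>) * \<beta>) \<alpha> p i"
proof -
  have i': "real i \<ge> 1" using i by simp
  define \<rho> where "\<rho> = (fact (i + p) :: real) / fact i"
  have \<rho>: "real i ^ p \<le> \<rho>"
    unfolding \<rho>_def using fact_mult_power_le_fact_add[of i p] by (simp add: field_simps)
  moreover have "1 \<le> real i ^ p" using i' by simp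
  ultimately have \<rho>1: "1 \<le> \<rho>" by linarith
  have "real i powr \<gamma> \<le> real i ^ p"
    using powr_mono[OF p i'] i' by (simp add: powr_realpow)
  also have "\<dots> \<le> \<rho>" by (rule \<rho>)
  also have "\<rho> \<le> \<rho> ^ \<alpha>" using \<rho>1 \<alpha> by (intro self_le_power) auto
  finally have \<gamma>_le: "real i powr \<gamma> \<le> \<rho> ^ \<alpha>" .
  have "real i ^ i \<le> exp (real i) * fact i"
    using power_div_fact_le_exp[of "real i" i] by (simp add: divide_le_eq mult.commute)
  moreover have "scale \<alpha> \<beta> \<gamma> i = (real i ^ i) ^ \<alpha> * \<beta> ^ i * real i powr \<gamma>"
    unfolding scale_def by (simp add: power_mult[symmetric] mult.commute)
  ultimately have "scale \<alpha> \<beta> \<gamma> i \<le> (exp (real i) * fact i) ^ \<alpha> * \<beta> ^ i * \<rho> ^ \<alpha>"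
    using \<beta> \<gamma>_le by (simp add: mult_mono power_mono)
  also have "\<dots> = exp (real \<alpha>) ^ i * \<beta> ^ i * (fact i * \<rho>) ^ \<alpha>"
    by (simp add: power_mult_distrib exp_of_nat_mult[symmetric] mult.commute)
  also have "fact i * \<rho> = fact (i + p)" unfolding \<rho>_def by simp
  finally show ?thesis unfolding fact_majorant_def by (simp add: power_mult_distrib)
qed

lemma fact_majorant_shifted_le:
  assumes \<beta>: "\<beta> > 0" and K: "K > 0" and n: "p + 1 + s \<le> n"
  shows "fact_majorant K (exp (real \<alpha>) * \<beta>) \<alpha> p (n - (p + 1 + s))
           \<le> K * \<beta> ^ (n - (p + 1 + s)) * real n ^ ((n - s) * \<alpha>)"
proof -
  define R where "R = p + 1 + s"
  define m where "m = n - R + p"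
  have m: "m + 1 = n - s" "n - R \<le> m" using n unfolding m_def R_def by auto
  have KB: "K * \<beta> ^ (n - R) \<ge> 0" using K \<beta> by simp
  have "fact_majorant K (exp (real \<alpha>) * \<beta>) \<alpha> p (n - R)
        = K * \<beta> ^ (n - R) * (exp (real \<alpha>) ^ (n - R) * fact m ^ \<alpha>)"
    unfolding fact_majorant_def m_def by (simp add: power_mult_distrib mult_ac)
  also have "\<dots> \<le> K * \<beta> ^ (n - R) * (exp (real \<alpha>) ^ m * fact m ^ \<alpha>)"
    using KB m(2) by (intro mult_left_mono mult_right_mono power_increasing) auto
  also have "exp (real \<alpha>) ^ m * fact m ^ \<alpha> = (exp (real m) * fact m) ^ \<alpha>"
    by (simp add: power_mult_distrib exp_of_nat_mult[symmetric] mult.commute)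
  also have "\<dots> \<le> (real (m + 1) ^ (m + 1)) ^ \<alpha>"
    using fact_mult_exp_le[of m] by (intro power_mono) (auto simp: mult.commute)
  also have "\<dots> = real (m + 1) ^ ((m + 1) * \<alpha>)"
    by (rule power_mult[symmetric])
  also have "\<dots> \<le> real n ^ ((n - s) * \<alpha>)"
    unfolding m(1) by (intro power_mono) auto
  finally show ?thesis
    using KB unfolding R_def by (simp add: mult_left_mono)
qed

lemma power_le_scale_mult_inverse_power:
  assumes n: "n \<ge> 1" "s \<le> n" and rs: "real r - \<gamma> \<le> real (\<alpha> * s)"
  shows "real n ^ ((n - s) * \<alpha>) \<le> real n ^ (\<alpha> * n) * real n powr \<gamma> * (1 / real n) ^ r"
proof -
  have n': "real n \<ge> 1" using n by simp
  have "real n powr (real r - \<gamma>) \<le> real n powr real (\<alpha> * s)"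
    by (rule powr_mono[OF rs n'])
  also have "\<dots> = real n ^ (\<alpha> * s)"
    using n' by (intro powr_realpow) simp
  finally have "real n ^ r \<le> real n ^ (\<alpha> * s) * real n powr \<gamma>"
    using n' by (simp add: powr_diff powr_realpow divide_le_eq)
  then have "real n ^ ((n - s) * \<alpha>) * real n ^ r \<le> real n ^ ((n - s) * \<alpha>) * (real n ^ (\<alpha> * s) * real n powr \<gamma>)"
    using n' by (intro mult_left_mono) auto
  also have "\<dots> = real n ^ (\<alpha> * n) * real n powr \<gamma>"
    using n by (simp add: power_add[symmetric] algebra_simps)
  finally show ?thesis using n' by (simp add: field_simps power_one_over)
qed

lemma fact_majorant_le_scale:
  assumes \<alpha>: "\<alpha> \<ge> 1" and \<beta>: "\<beta> > 0" and K: "K > 0"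
    and rs: "real r - \<gamma> \<le> real (\<alpha> * s)" and n: "p + 1 + s \<le> n"
  shows "fact_majorant K (exp (real \<alpha>) * \<beta>) \<alpha> p (n - (p + 1 + s))
           \<le> (K / \<beta> ^ (p + 1 + s)) * (scale \<alpha> \<beta> \<gamma> n * (1 / real n) ^ r)"
proof -
  define R where "R = p + 1 + s"
  have "fact_majorant K (exp (real \<alpha>) * \<beta>) \<alpha> p (n - R) \<le> K * \<beta> ^ (n - R) * real n ^ ((n - s) * \<alpha>)"
    using \<beta> K n unfolding R_def by (rule fact_majorant_shifted_le)
  also have "\<dots> \<le> K * \<beta> ^ (n - R) * (real n ^ (\<alpha> * n) * real n powr \<gamma> * (1 / real n) ^ r)"
    using K \<beta> n rs by (intro mult_left_mono power_le_scale_mult_inverse_power) auto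
  also have "\<dots> = (K / \<beta> ^ R) * (scale \<alpha> \<beta> \<gamma> n * (1 / real n) ^ r)"
  proof -
    have "R + (n - R) = n" using n unfolding R_def by simp
    then have "\<beta> ^ n = \<beta> ^ R * \<beta> ^ (n - R)" by (metis power_add)
    then show ?thesis unfolding scale_def using \<beta> by (simp add: field_simps)
  qed
  finally show ?thesis unfolding R_def .
qed

section \<open>Expansion of the shifted coefficients\<close>

lemma has_fps_expansion_ln_one_plus: "(\<lambda>z::complex. ln (1 + z)) has_fps_expansion fps_ln 1"
proof -
  have coeff: "(\<lambda>n. fps_ln 1 $ n * z ^ n) = (\<lambda>n. - ((- z) ^ n) / of_nat n)" for z :: complex
  proof
    fix n :: nat
    show "fps_ln 1 $ n * z ^ n = - ((- z) ^ n) / of_nat n"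
    proof (cases n)
      case 0
      then show ?thesis by (simp add: fps_ln_nth)
    next
      case (Suc k)
      have e1: "(- z) ^ n = (- 1) ^ n * z ^ n" by (rule power_minus)
      have e2: "fps_ln 1 $ n = (- 1) ^ k / of_nat n" using Suc by (simp only: fps_ln_nth) simp
      have e3: "- ((- 1 :: complex) ^ n) = (- 1) ^ k" using Suc by simp
      show ?thesis unfolding e1 e2 minus_mult_left e3 by (simp only: times_divide_eq_left)
    qed
  qed
  have "eventually (\<lambda>z::complex. z \<in> ball 0 1) (nhds 0)" by (intro eventually_nhds_in_open) auto
  then have "eventually (\<lambda>z::complex. eval_fps (fps_ln 1) z = ln (1 + z)) (nhds 0)"
  proof (rule eventually_mono)
    fix z :: complex assume "z \<in> ball 0 1"
    then have "norm z < 1" by simp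
    from Ln_series'[OF this] have "(\<lambda>n. fps_ln 1 $ n * z ^ n) sums ln (1 + z)" by (simp only: coeff)
    then show "eval_fps (fps_ln 1) z = ln (1 + z)" unfolding eval_fps_def by (rule sums_unique[symmetric])
  qed
  then show ?thesis unfolding has_fps_expansion_def by (simp add: fps_conv_radius_ln)
qed

lemma has_fps_expansion_taylor_remainder_le:
  fixes f :: "'a :: {banach, real_normed_field} \<Rightarrow> 'a"
  assumes "f has_fps_expansion F"
  shows "\<exists>C. eventually (\<lambda>z. norm (f z - (\<Sum>l<r. F $ l * z ^ l)) \<le> C * norm z ^ r) (nhds 0)"
proof -
  define F' where "F' = fps_shift r F"
  have rad: "fps_conv_radius F > 0" using assms by (simp add: has_fps_expansion_def)
  have "continuous (at 0 within UNIV) (eval_fps F')"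
    using rad by (intro continuous_eval_fps) (simp add: F'_def zero_ereal_def)
  then have "eventually (\<lambda>z. dist (eval_fps F' z) (eval_fps F' 0) < 1) (at 0)"
    by (intro tendstoD) (auto simp: continuous_def)
  then have "eventually (\<lambda>z. norm (eval_fps F' z) \<le> norm (eval_fps F' 0) + 1) (at 0)"
  proof (rule eventually_mono)
    fix z assume "dist (eval_fps F' z) (eval_fps F' 0) < 1"
    then show "norm (eval_fps F' z) \<le> norm (eval_fps F' 0) + 1"
      using norm_triangle_sub[of "eval_fps F' z" "eval_fps F' 0"] by (simp add: dist_norm)
  qed
  then have "eventually (\<lambda>z. norm (eval_fps F' z) \<le> norm (eval_fps F' 0) + 1) (nhds 0)"
    unfolding eventually_nhds_conv_at by simp
  moreover have "eventually (\<lambda>z. eval_fps F z = f z) (nhds 0)"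
    using assms by (simp add: has_fps_expansion_def)
  moreover have "eventually (\<lambda>z. z \<in> eball 0 (fps_conv_radius F)) (nhds 0)"
    using rad by (intro eventually_nhds_in_open) (auto simp: zero_ereal_def)
  ultimately have "eventually (\<lambda>z. norm (f z - (\<Sum>l<r. F $ l * z ^ l))
                     \<le> (norm (eval_fps F' 0) + 1) * norm z ^ r) (nhds 0)"
  proof eventually_elim
    case (elim z)
    have z: "ereal (norm z) < fps_conv_radius F" using elim(3) by simp
    have "eval_fps F z = (\<Sum>n. F $ (n + r) * z ^ (n + r)) + (\<Sum>i<r. F $ i * z ^ i)"
      unfolding eval_fps_def by (rule suminf_split_initial_segment[OF summable_fps[OF z]])
    also have "(\<Sum>n. F $ (n + r) * z ^ (n + r)) = (\<Sum>n. z ^ r * (F' $ n * z ^ n))"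
      by (simp add: F'_def power_add mult_ac)
    also have "\<dots> = z ^ r * eval_fps F' z"
    proof -
      have "summable (\<lambda>n. F' $ n * z ^ n)" using z by (intro summable_fps) (simp add: F'_def)
      then show ?thesis unfolding eval_fps_def by (rule suminf_mult)
    qed
    finally have "norm (f z - (\<Sum>l<r. F $ l * z ^ l)) = norm z ^ r * norm (eval_fps F' z)"
      using elim(2) by (simp add: norm_mult norm_power)
    also have "\<dots> \<le> norm z ^ r * (norm (eval_fps F' 0) + 1)"
      using elim(1) by (intro mult_left_mono) auto
    finally show ?case by (simp add: mult.commute)
  qed
  then show ?thesis by blast
qed

lemma has_fps_expansion_divide_X:
  fixes f :: "complex \<Rightarrow> complex" and F :: "complex fps"
  assumes "f has_fps_expansion F" "F $ 0 = 0"
  shows "(\<lambda>z. if z = 0 then F $ 1 else f z / z) has_fps_expansion fps_shift 1 F"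
proof (cases "F = 0")
  case True
  then have "eventually (\<lambda>z. f z = 0) (nhds 0)"
    using assms(1) by (simp add: has_fps_expansion_0_iff)
  then show ?thesis
    using True by (auto simp: has_fps_expansion_0_iff elim: eventually_mono)
next
  case False
  then have "1 \<le> subdegree F" using assms(2) by (intro subdegree_geI) auto
  from has_fps_expansion_shift[OF assms(1) this refl] show ?thesis by (simp only: power_one_right)
qed

text \<open>The prefactor of \<open>At_j\<close> as an analytic function. For \<open>z = 1/n\<close> it equals
  \<open>scale (n - j) / scale n\<close>; the value at the removable singularity \<open>z = 0\<close> is
  the constant coefficient of the power series of \<open>(ln (1 - j z) + j z) / z\<close>.\<close>
definition shift_ratio :: "nat \<Rightarrow> real \<Rightarrow> real \<Rightarrow> nat \<Rightarrow> complex \<Rightarrow> complex" where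
  "shift_ratio \<alpha> \<beta> \<gamma> j z = complex_of_real (exp (- real (\<alpha> * j)) * inverse \<beta> ^ j) * z ^ (\<alpha> * j)
     * (1 + (- of_nat j) * z) powr (complex_of_real (\<gamma> - real (\<alpha> * j)))
     * exp (of_nat \<alpha> * (if z = 0 then ((fps_ln 1 oo (fps_const (- of_nat j) * fps_X)) + fps_const (of_nat j) * fps_X) $ 1
                       else (ln (1 + (- of_nat j) * z) + of_nat j * z) / z))"

definition shift_ratio_fps :: "nat \<Rightarrow> real \<Rightarrow> real \<Rightarrow> nat \<Rightarrow> complex fps" where
  "shift_ratio_fps \<alpha> \<beta> \<gamma> j =
     fps_const (of_real (exp (- real (\<alpha> * j)) * inverse \<beta> ^ j))
     * fps_X ^ (\<alpha> * j)
     * (fps_binomial (of_real (\<gamma> - real (\<alpha> * j))) oo (fps_const (- of_nat j) * fps_X))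
     * (fps_exp 1 oo (fps_const (of_nat \<alpha>) *
          fps_shift 1 ((fps_ln 1 oo (fps_const (- of_nat j) * fps_X)) + fps_const (of_nat j) * fps_X)))"

lemma At_j_eq_shift_ratio_fps:
  "At_j \<alpha> \<beta> \<gamma> At j = shift_ratio_fps \<alpha> \<beta> \<gamma> j * (At oo (fps_X * inverse (1 - fps_const (of_nat j) * fps_X)))"
  unfolding At_j_def shift_ratio_fps_def ..

lemma has_fps_expansion_shift_ratio: "shift_ratio \<alpha> \<beta> \<gamma> j has_fps_expansion shift_ratio_fps \<alpha> \<beta> \<gamma> j"
proof -
  define G :: "complex fps" where "G = (fps_ln 1 oo (fps_const (- of_nat j) * fps_X)) + fps_const (of_nat j) * fps_X"
  have lin: "(\<lambda>z::complex. (- of_nat j) * z) has_fps_expansion fps_const (- of_nat j) * fps_X"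
    by (intro has_fps_expansion_cmult_left has_fps_expansion_fps_X)
  have lin0: "(fps_const (- of_nat j) * fps_X :: complex fps) $ 0 = 0" by simp
  have binomial: "(\<lambda>z::complex. (1 + (- of_nat j) * z) powr (complex_of_real (\<gamma> - real (\<alpha> * j))))
            has_fps_expansion (fps_binomial (of_real (\<gamma> - real (\<alpha> * j))) oo (fps_const (- of_nat j) * fps_X))"
    using has_fps_expansion_compose[OF has_fps_expansion_binomial_complex lin lin0] unfolding o_def .
  have "(\<lambda>z::complex. ln (1 + (- of_nat j) * z)) has_fps_expansion (fps_ln 1 oo (fps_const (- of_nat j) * fps_X))"
    using has_fps_expansion_compose[OF has_fps_expansion_ln_one_plus lin lin0] unfolding o_def .
  then have "(\<lambda>z::complex. ln (1 + (- of_nat j) * z) + of_nat j * z) has_fps_expansion G"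
    unfolding G_def by (intro has_fps_expansion_add has_fps_expansion_cmult_left has_fps_expansion_fps_X)
  moreover have "G $ 0 = 0" "G $ 1 = 0" unfolding G_def by (simp_all add: fps_compose_nth fps_ln_nth)
  ultimately have "(\<lambda>z::complex. of_nat \<alpha> * (if z = 0 then G $ 1 else (ln (1 + (- of_nat j) * z) + of_nat j * z) / z))
            has_fps_expansion fps_const (of_nat \<alpha>) * fps_shift 1 G"
    by (intro has_fps_expansion_cmult_left has_fps_expansion_divide_X)
  moreover have "(fps_const (of_nat \<alpha>) * fps_shift 1 G) $ 0 = 0" using \<open>G $ 1 = 0\<close> by simp
  ultimately have exp: "(\<lambda>z::complex. exp (of_nat \<alpha> * (if z = 0 then G $ 1 else (ln (1 + (- of_nat j) * z) + of_nat j * z) / z)))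
            has_fps_expansion (fps_exp 1 oo (fps_const (of_nat \<alpha>) * fps_shift 1 G))"
    using has_fps_expansion_compose[OF has_fps_expansion_exp1] unfolding o_def by blast
  have "(\<lambda>z. complex_of_real (exp (- real (\<alpha> * j)) * inverse \<beta> ^ j) * z ^ (\<alpha> * j)
            * (1 + (- of_nat j) * z) powr (complex_of_real (\<gamma> - real (\<alpha> * j)))
            * exp (of_nat \<alpha> * (if z = 0 then G $ 1 else (ln (1 + (- of_nat j) * z) + of_nat j * z) / z)))
        has_fps_expansion shift_ratio_fps \<alpha> \<beta> \<gamma> j"
    unfolding shift_ratio_fps_def G_def[symmetric]
    by (intro has_fps_expansion_mult has_fps_expansion_cmult_left has_fps_expansion_fps_X_power binomial exp)
  then show ?thesis unfolding shift_ratio_def G_def[symmetric] .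
qed

lemma scale_diff_div_scale:
  assumes \<beta>: "\<beta> > 0" and n: "j < n"
  defines "x \<equiv> 1 - real j / real n"
  shows "exp (- real (\<alpha> * j)) * inverse \<beta> ^ j * (1 / real n) ^ (\<alpha> * j) * x powr (\<gamma> - real (\<alpha> * j))
          * exp (real \<alpha> * ((ln x + real j / real n) * real n))
         = scale \<alpha> \<beta> \<gamma> (n - j) / scale \<alpha> \<beta> \<gamma> n"
proof -
  define N where "N = real n"
  have N: "N > 0" using n unfolding N_def by simp
  have x: "x > 0" using n unfolding x_def by (simp add: field_simps)
  have xN: "real (n - j) = x * N" using n N unfolding x_def N_def by (simp add: field_simps of_nat_diff)
  have ex: "exp (real \<alpha> * ((ln x + real j / N) * N)) = x ^ (\<alpha> * n) * exp (real (\<alpha> * j))"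
  proof -
    have "real \<alpha> * ((ln x + real j / N) * N) = real (\<alpha> * n) * ln x + real (\<alpha> * j)"
      using N unfolding N_def by (simp add: field_simps)
    then have "exp (real \<alpha> * ((ln x + real j / N) * N)) = exp (real (\<alpha> * n) * ln x) * exp (real (\<alpha> * j))"
      by (simp add: exp_add)
    also have "exp (real (\<alpha> * n) * ln x) = exp (ln x) ^ (\<alpha> * n)" by (rule exp_of_nat_mult)
    finally show ?thesis using x by simp
  qed
  have "x powr real (\<alpha> * j) = x ^ (\<alpha> * j)" using x by (rule powr_realpow)
  then have xp: "x powr (\<gamma> - real (\<alpha> * j)) = x powr \<gamma> / x ^ (\<alpha> * j)"
    by (simp only: powr_diff)
  have an: "\<alpha> * n = \<alpha> * j + \<alpha> * (n - j)" using n by (simp add: add_mult_distrib2[symmetric])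
  have split: "y ^ (\<alpha> * n) = y ^ (\<alpha> * j) * y ^ (\<alpha> * (n - j))" for y :: real
    by (subst an) (rule power_add)
  have "\<beta> ^ n = \<beta> ^ j * \<beta> ^ (n - j)" using n by (simp add: power_add[symmetric])
  moreover have "scale \<alpha> \<beta> \<gamma> (n - j) = (x * N) ^ (\<alpha> * (n - j)) * \<beta> ^ (n - j) * (x * N) powr \<gamma>"
    unfolding scale_def xN ..
  moreover have "scale \<alpha> \<beta> \<gamma> n = N ^ (\<alpha> * n) * \<beta> ^ n * N powr \<gamma>" unfolding scale_def N_def ..
  ultimately show ?thesis
    using x N \<beta> unfolding ex xp split[of x] split[of N] N_def[symmetric]
    by (simp add: exp_minus power_mult_distrib powr_mult field_simps)
qed

lemma shift_ratio_at_inverse: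
  assumes \<beta>: "\<beta> > 0" and n: "j < n"
  shows "shift_ratio \<alpha> \<beta> \<gamma> j (1 / of_nat n) = complex_of_real (scale \<alpha> \<beta> \<gamma> (n - j) / scale \<alpha> \<beta> \<gamma> n)"
proof -
  define N where "N = real n"
  have N: "N > 0" using n unfolding N_def by simp
  define x where "x = 1 - real j / N"
  have x: "x > 0" using n unfolding x_def N_def by (simp add: field_simps)
  have z: "(1 / of_nat n :: complex) = complex_of_real (1 / N)" unfolding N_def by simp
  have "1 + (- of_nat j) * complex_of_real (1 / N) = complex_of_real x" unfolding x_def by simp
  moreover have "complex_of_real x powr complex_of_real (\<gamma> - real (\<alpha> * j)) = complex_of_real (x powr (\<gamma> - real (\<alpha> * j)))"
    using x by (intro powr_of_real) simp
  moreover have "ln (complex_of_real x) = complex_of_real (ln x)" using x by (rule Ln_of_real)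
  moreover have "(complex_of_real (ln x) + of_nat j * complex_of_real (1 / N)) / complex_of_real (1 / N)
                 = complex_of_real ((ln x + real j / N) * N)"
    using N by (simp add: field_simps)
  moreover have "exp (of_nat \<alpha> * complex_of_real ((ln x + real j / N) * N))
                 = complex_of_real (exp (real \<alpha> * ((ln x + real j / N) * N)))"
    by (simp only: exp_of_real[symmetric] of_real_mult of_real_of_nat_eq)
  ultimately have "shift_ratio \<alpha> \<beta> \<gamma> j (1 / of_nat n)
      = complex_of_real (exp (- real (\<alpha> * j)) * inverse \<beta> ^ j * (1 / N) ^ (\<alpha> * j) * x powr (\<gamma> - real (\<alpha> * j))
          * exp (real \<alpha> * ((ln x + real j / N) * N)))"
    unfolding shift_ratio_def z using N by (simp del: of_real_divide)
  also have "\<dots> = complex_of_real (scale \<alpha> \<beta> \<gamma> (n - j) / scale \<alpha> \<beta> \<gamma> n)"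
    using scale_diff_div_scale[OF \<beta> n, of \<alpha> \<gamma>] unfolding x_def N_def by simp
  finally show ?thesis .
qed

lemma has_fps_expansion_shift_arg:
  "(\<lambda>z::complex. z * inverse (1 - of_nat j * z)) has_fps_expansion fps_X * inverse (1 - fps_const (of_nat j) * fps_X)"
  by (intro has_fps_expansion_mult has_fps_expansion_fps_X has_fps_expansion_inverse
        has_fps_expansion_diff has_fps_expansion_1 has_fps_expansion_cmult_left) simp

lemma shift_arg_at_inverse:
  assumes "j < n"
  shows "(1 / of_nat n) * inverse (1 - of_nat j * (1 / of_nat n)) = (1 / of_nat (n - j) :: complex)"
proof -
  have "(of_nat n :: complex) \<noteq> 0" "(of_nat n - of_nat j :: complex) \<noteq> 0"
    using assms by (auto simp flip: of_nat_diff)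
  then show ?thesis using assms by (simp add: field_simps of_nat_diff)
qed

lemma fps_nth_mult_compose_truncation:
  fixes E G At :: "'a :: comm_ring_1 fps"
  assumes G0: "G $ 0 = 0" and l: "l < r"
  shows "(E * (\<Sum>i<r. fps_const (At $ i) * G ^ i)) $ l = (E * (At oo G)) $ l"
proof -
  have "(\<Sum>i<r. fps_const (At $ i) * G ^ i) $ u = (At oo G) $ u" if u: "u \<le> l" for u
  proof -
    have "(\<Sum>i<r. fps_const (At $ i) * G ^ i) $ u = (\<Sum>i=0..u. At $ i * (G ^ i) $ u)"
      unfolding fps_sum_nth fps_mult_left_const_nth
    proof (rule sum.mono_neutral_right)
      show "\<forall>i\<in>{..<r} - {0..u}. At $ i * (G ^ i) $ u = 0"
        using startsby_zero_power_prefix[OF G0] by auto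
    qed (use u l in auto)
    then show ?thesis by (simp add: fps_compose_nth)
  qed
  then show ?thesis by (simp add: fps_mult_nth)
qed

lemma shift_ratio_taylor:
  "\<exists>C. eventually (\<lambda>n. norm (shift_ratio \<alpha> \<beta> \<gamma> j (1 / of_nat n) * (\<Sum>l<r. At $ l * (1 / of_nat (n - j)) ^ l)
        - (\<Sum>l<r. At_j \<alpha> \<beta> \<gamma> At j $ l * (1 / of_nat n) ^ l)) \<le> C * (1 / real n) ^ r) at_top"
proof -
  define G :: "complex fps" where "G = fps_X * inverse (1 - fps_const (of_nat j) * fps_X)"
  define \<Phi> where "\<Phi> z = shift_ratio \<alpha> \<beta> \<gamma> j z * (\<Sum>l<r. At $ l * (z * inverse (1 - of_nat j * z)) ^ l)" for z
  define \<Phi>F where "\<Phi>F = shift_ratio_fps \<alpha> \<beta> \<gamma> j * (\<Sum>l<r. fps_const (At $ l) * G ^ l)"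
  have "\<Phi> has_fps_expansion \<Phi>F"
    unfolding \<Phi>_def[abs_def] \<Phi>F_def G_def
    by (intro has_fps_expansion_mult has_fps_expansion_shift_ratio has_fps_expansion_sum
        has_fps_expansion_cmult_left has_fps_expansion_power has_fps_expansion_shift_arg)
  then obtain C where "eventually (\<lambda>z. norm (\<Phi> z - (\<Sum>l<r. \<Phi>F $ l * z ^ l)) \<le> C * norm z ^ r) (nhds 0)"
    using has_fps_expansion_taylor_remainder_le by blast
  then have ev: "eventually (\<lambda>n. norm (\<Phi> (1 / of_nat n) - (\<Sum>l<r. \<Phi>F $ l * (1 / of_nat n) ^ l))
               \<le> C * norm (1 / of_nat n :: complex) ^ r) at_top"
    using lim_1_over_n unfolding filterlim_iff by blast
  have sum_eq: "(\<Sum>l<r. \<Phi>F $ l * z ^ l) = (\<Sum>l<r. At_j \<alpha> \<beta> \<gamma> At j $ l * z ^ l)" for z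
    unfolding \<Phi>F_def At_j_eq_shift_ratio_fps G_def
    by (intro sum.cong refl) (subst fps_nth_mult_compose_truncation, auto)
  have \<Phi>_at: "\<Phi> (1 / of_nat n) = shift_ratio \<alpha> \<beta> \<gamma> j (1 / of_nat n) * (\<Sum>l<r. At $ l * (1 / of_nat (n - j)) ^ l)"
    if "j < n" for n
    unfolding \<Phi>_def using shift_arg_at_inverse[OF that] by simp
  have "eventually (\<lambda>n. norm (shift_ratio \<alpha> \<beta> \<gamma> j (1 / of_nat n) * (\<Sum>l<r. At $ l * (1 / of_nat (n - j)) ^ l)
        - (\<Sum>l<r. At_j \<alpha> \<beta> \<gamma> At j $ l * (1 / of_nat n) ^ l)) \<le> C * (1 / real n) ^ r) at_top"
    using ev eventually_gt_at_top[of j]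
  proof eventually_elim
    case (elim n)
    then show ?case unfolding sum_eq \<Phi>_at[OF elim(2)] by (simp add: norm_divide)
  qed
  then show ?thesis by blast
qed

lemma scale_diff_le:
  assumes \<beta>: "\<beta> > 0"
  shows "\<exists>C. eventually (\<lambda>n. scale \<alpha> \<beta> \<gamma> (n - j) \<le> C * scale \<alpha> \<beta> \<gamma> n) at_top"
proof -
  obtain C where "eventually (\<lambda>z. norm (shift_ratio \<alpha> \<beta> \<gamma> j z - (\<Sum>l<0. shift_ratio_fps \<alpha> \<beta> \<gamma> j $ l * z ^ l))
                    \<le> C * norm z ^ 0) (nhds 0)"
    using has_fps_expansion_taylor_remainder_le[OF has_fps_expansion_shift_ratio] by blast
  then have "eventually (\<lambda>z. norm (shift_ratio \<alpha> \<beta> \<gamma> j z) \<le> C) (nhds 0)"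
    by simp
  then have "eventually (\<lambda>n. norm (shift_ratio \<alpha> \<beta> \<gamma> j (1 / of_nat n)) \<le> C) at_top"
    using lim_1_over_n unfolding filterlim_iff by blast
  then have "eventually (\<lambda>n. scale \<alpha> \<beta> \<gamma> (n - j) \<le> C * scale \<alpha> \<beta> \<gamma> n) at_top"
    using eventually_gt_at_top[of j]
  proof eventually_elim
    case (elim n)
    have "norm (shift_ratio \<alpha> \<beta> \<gamma> j (1 / of_nat n)) = \<bar>scale \<alpha> \<beta> \<gamma> (n - j) / scale \<alpha> \<beta> \<gamma> n\<bar>"
      unfolding shift_ratio_at_inverse[OF \<beta> elim(2)] by (rule norm_of_real)
    then have "scale \<alpha> \<beta> \<gamma> (n - j) / scale \<alpha> \<beta> \<gamma> n \<le> C"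
      using elim(1) scale_nonneg[OF \<beta>] by simp
    then show ?case using scale_pos[OF \<beta>, of n] elim(2) by (simp add: divide_le_eq)
  qed
  then show ?thesis by blast
qed

text \<open>The coefficient \<open>a\<^sub>n\<^sub>-\<^sub>j\<close> has the expansion \<open>At_j\<close> on the scale of \<open>a\<^sub>n\<close>:
  \<open>shift_ratio\<close> converts the scale and \<open>z / (1 - j z)\<close> converts \<open>1/(n - j)\<close> into \<open>1/n\<close>.\<close>
lemma asymp_fps_shifted:
  fixes A At :: "complex fps"
  assumes \<beta>: "\<beta> > 0" and A: "asymp_fps (fps_nth A) (scale \<alpha> \<beta> \<gamma>) At"
  shows "\<exists>C. eventually (\<lambda>n. norm (A $ (n - j) - of_real (scale \<alpha> \<beta> \<gamma> n) *
            (\<Sum>l<r. At_j \<alpha> \<beta> \<gamma> At j $ l * (1 / of_nat n) ^ l))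
            \<le> C * (scale \<alpha> \<beta> \<gamma> n * (1 / real n) ^ r)) at_top"
proof -
  let ?s = "scale \<alpha> \<beta> \<gamma>"
  have "(\<lambda>n. norm (A $ n - of_real (?s n) * (\<Sum>l<r. At $ l * (1 / of_nat n) ^ l))) \<in> O(\<lambda>n. ?s n * (1 / real n) ^ r)"
    using A unfolding asymp_fps_def by blast
  then obtain C0 N0 where C0: "C0 > 0" and N0: "\<And>m. m \<ge> N0 \<Longrightarrow>
      norm (A $ m - of_real (?s m) * (\<Sum>l<r. At $ l * (1 / of_nat m) ^ l)) \<le> C0 * (?s m * (1 / real m) ^ r)"
    by (elim landau_o.bigE) (auto simp: eventually_at_top_linorder abs_mult scale_nonneg[OF \<beta>])
  obtain CT where CT: "eventually (\<lambda>n. norm (shift_ratio \<alpha> \<beta> \<gamma> j (1 / of_nat n) * (\<Sum>l<r. At $ l * (1 / of_nat (n - j)) ^ l)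
        - (\<Sum>l<r. At_j \<alpha> \<beta> \<gamma> At j $ l * (1 / of_nat n) ^ l)) \<le> CT * (1 / real n) ^ r) at_top"
    using shift_ratio_taylor by blast
  obtain CE where CE: "eventually (\<lambda>n. ?s (n - j) \<le> CE * ?s n) at_top"
    using scale_diff_le[OF \<beta>] by blast
  have "eventually (\<lambda>n. norm (A $ (n - j) - of_real (?s n) * (\<Sum>l<r. At_j \<alpha> \<beta> \<gamma> At j $ l * (1 / of_nat n) ^ l))
          \<le> (C0 * CE * 2 ^ r + CT) * (?s n * (1 / real n) ^ r)) at_top"
    using CT CE eventually_ge_at_top[of "N0 + 2 * j + 1"]
  proof eventually_elim
    case (elim n)
    have n: "j < n" "2 * j \<le> n" "N0 \<le> n - j" using elim(3) by auto
    have s: "?s n > 0" using n scale_pos[OF \<beta>] by simp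
    have "of_real (?s n) * shift_ratio \<alpha> \<beta> \<gamma> j (1 / of_nat n) = of_real (?s (n - j))"
      using shift_ratio_at_inverse[OF \<beta> n(1)] s by simp
    then have "A $ (n - j) - of_real (?s n) * (\<Sum>l<r. At_j \<alpha> \<beta> \<gamma> At j $ l * (1 / of_nat n) ^ l)
        = (A $ (n - j) - of_real (?s (n - j)) * (\<Sum>l<r. At $ l * (1 / of_nat (n - j)) ^ l))
          + of_real (?s n) * (shift_ratio \<alpha> \<beta> \<gamma> j (1 / of_nat n) * (\<Sum>l<r. At $ l * (1 / of_nat (n - j)) ^ l)
               - (\<Sum>l<r. At_j \<alpha> \<beta> \<gamma> At j $ l * (1 / of_nat n) ^ l))"
      by (simp add: algebra_simps)
    also have "norm \<dots> \<le> C0 * (?s (n - j) * (1 / real (n - j)) ^ r) + ?s n * (CT * (1 / real n) ^ r)"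
      using N0[OF n(3)] elim(1) s by (intro norm_triangle_le add_mono) (auto simp: norm_mult)
    also have "C0 * (?s (n - j) * (1 / real (n - j)) ^ r) \<le> C0 * ((CE * ?s n) * (2 ^ r * (1 / real n) ^ r))"
    proof (intro mult_left_mono mult_mono)
      have "1 / real (n - j) \<le> 2 * (1 / real n)" using n by (simp add: field_simps of_nat_diff)
      then show "(1 / real (n - j)) ^ r \<le> 2 ^ r * (1 / real n) ^ r"
        by (metis power_mono power_mult_distrib zero_le_divide_1_iff of_nat_0_le_iff)
    qed (use C0 elim(2) scale_nonneg[OF \<beta>, of \<alpha> \<gamma>] order_trans[OF scale_nonneg[OF \<beta>] elim(2)] in auto)
    finally show ?case by (simp add: algebra_simps)
  qed
  then show ?thesis by blast
qed

lemma At_j_nth_eq_0: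
  assumes "l < \<alpha> * j"
  shows "At_j \<alpha> \<beta> \<gamma> At j $ l = 0"
proof -
  have "At_j \<alpha> \<beta> \<gamma> At j = fps_X ^ (\<alpha> * j) *
     (fps_const (of_real (exp (- real (\<alpha> * j)) * inverse \<beta> ^ j))
     * (fps_binomial (of_real (\<gamma> - real (\<alpha> * j))) oo (fps_const (- of_nat j) * fps_X))
     * (fps_exp 1 oo (fps_const (of_nat \<alpha>) *
          fps_shift 1 ((fps_ln 1 oo (fps_const (- of_nat j) * fps_X)) + fps_const (of_nat j) * fps_X)))
     * (At oo (fps_X * inverse (1 - fps_const (of_nat j) * fps_X))))"
    unfolding At_j_def by (simp only: mult_ac)
  then show ?thesis using assms by (simp only: fps_X_power_mult_nth) simp
qed

section \<open>Expansion of the composition\<close>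

lemma At_H_partial_sum:
  assumes "r \<le> R" and \<alpha>: "\<alpha> \<ge> 1"
  shows "(\<Sum>l<r. At_H \<alpha> \<beta> \<gamma> At Hf A $ l * z ^ l)
       = (\<Sum>j<R. (fps_deriv Hf oo A) $ j * (\<Sum>l<r. At_j \<alpha> \<beta> \<gamma> At j $ l * z ^ l))"
proof -
  have "At_H \<alpha> \<beta> \<gamma> At Hf A $ l = (\<Sum>j<R. At_j \<alpha> \<beta> \<gamma> At j $ l * (fps_deriv Hf oo A) $ j)"
    if l: "l < r" for l
  proof -
    have "At_H \<alpha> \<beta> \<gamma> At Hf A $ l = (\<Sum>j\<le>l. At_j \<alpha> \<beta> \<gamma> At j $ l * (fps_deriv Hf oo A) $ j)"
      unfolding At_H_def by simp
    also have "\<dots> = (\<Sum>j<R. At_j \<alpha> \<beta> \<gamma> At j $ l * (fps_deriv Hf oo A) $ j)"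
    proof (rule sum.mono_neutral_left)
      show "\<forall>j\<in>{..<R} - {..l}. At_j \<alpha> \<beta> \<gamma> At j $ l * (fps_deriv Hf oo A) $ j = 0"
      proof
        fix j assume "j \<in> {..<R} - {..l}"
        then have "l < j" by auto
        also have "j \<le> \<alpha> * j" using mult_le_mono1[OF \<alpha>, of j] by (simp only: mult_1)
        finally show "At_j \<alpha> \<beta> \<gamma> At j $ l * (fps_deriv Hf oo A) $ j = 0" by (simp add: At_j_nth_eq_0)
      qed
    qed (use l assms in auto)
    finally show ?thesis .
  qed
  then have "(\<Sum>l<r. At_H \<alpha> \<beta> \<gamma> At Hf A $ l * z ^ l)
        = (\<Sum>l<r. \<Sum>j<R. (fps_deriv Hf oo A) $ j * (At_j \<alpha> \<beta> \<gamma> At j $ l * z ^ l))"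
    by (simp add: sum_distrib_left sum_distrib_right mult_ac)
  also have "\<dots> = (\<Sum>j<R. (fps_deriv Hf oo A) $ j * (\<Sum>l<r. At_j \<alpha> \<beta> \<gamma> At j $ l * z ^ l))"
    by (subst sum.swap) (simp add: sum_distrib_left)
  finally show ?thesis .
qed

lemma asymp_fps_imp_le_scale:
  fixes A At :: "complex fps"
  assumes \<beta>: "\<beta> > 0" and A: "asymp_fps (fps_nth A) (scale \<alpha> \<beta> \<gamma>) At"
  shows "\<exists>K>0. \<forall>n\<ge>1. norm (A $ n) \<le> K * scale \<alpha> \<beta> \<gamma> n"
proof -
  let ?s = "scale \<alpha> \<beta> \<gamma>"
  have "(\<lambda>n. norm (A $ n - of_real (?s n) * (\<Sum>l<0. At $ l * (1 / of_nat n) ^ l))) \<in> O(\<lambda>n. ?s n * (1 / real n) ^ 0)"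
    using A unfolding asymp_fps_def by blast
  then obtain C N where C: "C > 0" and N: "\<And>n. n \<ge> N \<Longrightarrow> norm (A $ n) \<le> C * ?s n"
    by (elim landau_o.bigE) (auto simp: eventually_at_top_linorder scale_nonneg[OF \<beta>])
  define S where "S = (\<Sum>n<N. norm (A $ n) / ?s n)"
  have S: "S \<ge> 0" unfolding S_def using scale_nonneg[OF \<beta>] by (intro sum_nonneg) auto
  have "norm (A $ n) \<le> (C + S) * ?s n" if n: "n \<ge> 1" for n
  proof (cases "n \<ge> N")
    case True
    then show ?thesis using N[of n] S scale_nonneg[OF \<beta>, of \<alpha> \<gamma> n] by (simp add: distrib_right add_increasing2)
  next
    case False
    then have "norm (A $ n) / ?s n \<le> S"
      unfolding S_def using scale_nonneg[OF \<beta>] by (intro member_le_sum) auto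
    then have "norm (A $ n) \<le> S * ?s n" using scale_pos[OF \<beta> n] by (simp add: divide_le_eq)
    then show ?thesis using C scale_nonneg[OF \<beta>, of \<alpha> \<gamma> n] by (simp add: distrib_right add_increasing)
  qed
  then show ?thesis using C S by (intro exI[of _ "C + S"]) auto
qed

lemma asymp_fps_imp_le_fact_majorant:
  fixes A At :: "complex fps"
  assumes \<alpha>: "\<alpha> \<ge> 1" and \<beta>: "\<beta> > 0" and A_0: "A $ 0 = 0" and A: "asymp_fps (fps_nth A) (scale \<alpha> \<beta> \<gamma>) At"
  shows "\<exists>K>0. \<forall>i. norm (A $ i) \<le> fact_majorant K (exp (real \<alpha>) * \<beta>) \<alpha> (nat \<lceil>\<gamma>\<rceil>) i"
proof -
  obtain K where K: "K > 0" "\<And>n. n \<ge> 1 \<Longrightarrow> norm (A $ n) \<le> K * scale \<alpha> \<beta> \<gamma> n"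
    using asymp_fps_imp_le_scale[OF \<beta> A] by blast
  have "norm (A $ i) \<le> fact_majorant K (exp (real \<alpha>) * \<beta>) \<alpha> (nat \<lceil>\<gamma>\<rceil>) i" for i
  proof (cases "i \<ge> 1")
    case True
    have "scale \<alpha> \<beta> \<gamma> i \<le> fact_majorant 1 (exp (real \<alpha>) * \<beta>) \<alpha> (nat \<lceil>\<gamma>\<rceil>) i"
      using \<alpha> \<beta> True by (rule scale_le_fact_majorant) linarith
    then show ?thesis
      using K(1) order_trans[OF K(2)[OF True]] by (simp add: fact_majorant_def mult_left_mono)
  next
    case False
    have "exp (real \<alpha>) * \<beta> > 0" using \<beta> by simp
    moreover have "i = 0" using False by simp
    ultimately show ?thesis using A_0 less_imp_le[OF fact_majorant_pos[OF K(1)]] by simp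
  qed
  then show ?thesis using K(1) by blast
qed

lemma compose_nth_approx_on_scale:
  fixes Hf A :: "complex fps"
  assumes Hf: "\<And>m. norm (Hf $ m) \<le> M * w ^ m" "M > 0" "w \<ge> 1"
    and A_0: "A $ 0 = 0" and A: "\<And>i. norm (A $ i) \<le> fact_majorant K (exp (real \<alpha>) * \<beta>) \<alpha> p i"
    and K: "K > 0" and \<alpha>: "\<alpha> \<ge> 1" and \<beta>: "\<beta> > 0"
    and rs: "real r - \<gamma> \<le> real (\<alpha> * s)"
  shows "\<exists>C. eventually (\<lambda>n. norm ((Hf oo A) $ n - (\<Sum>j<p+1+s. (fps_deriv Hf oo A) $ j * A $ (n - j)))
               \<le> C * (scale \<alpha> \<beta> \<gamma> n * (1 / real n) ^ r)) at_top"
proof -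
  obtain C where C: "\<And>n. n \<ge> 2 * (p + 1 + s) \<Longrightarrow>
      norm ((Hf oo A) $ n - (\<Sum>j<p+1+s. (fps_deriv Hf oo A) $ j * A $ (n - j)))
      \<le> C * fact_majorant K (exp (real \<alpha>) * \<beta>) \<alpha> p (n - (p + 1 + s))"
    using fps_compose_nth_approx[OF Hf A_0 A K _ \<alpha>, of "p + 1 + s"] \<beta> by auto
  have "norm ((Hf oo A) $ n - (\<Sum>j<p+1+s. (fps_deriv Hf oo A) $ j * A $ (n - j)))
        \<le> (max C 0 * (K / \<beta> ^ (p + 1 + s))) * (scale \<alpha> \<beta> \<gamma> n * (1 / real n) ^ r)"
    if n: "n \<ge> 2 * (p + 1 + s)" for n
  proof -
    have "C * fact_majorant K (exp (real \<alpha>) * \<beta>) \<alpha> p (n - (p + 1 + s))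
          \<le> max C 0 * fact_majorant K (exp (real \<alpha>) * \<beta>) \<alpha> p (n - (p + 1 + s))"
    proof (intro mult_right_mono less_imp_le[OF fact_majorant_pos[OF K]])
      show "exp (real \<alpha>) * \<beta> > 0" using \<beta> by simp
    qed simp
    also have "\<dots> \<le> max C 0 * ((K / \<beta> ^ (p + 1 + s)) * (scale \<alpha> \<beta> \<gamma> n * (1 / real n) ^ r))"
      using n by (intro mult_left_mono fact_majorant_le_scale[OF \<alpha> \<beta> K rs]) auto
    finally show ?thesis using C[OF n] by (simp add: mult_ac)
  qed
  then show ?thesis by (blast intro: eventually_at_top_linorderI)
qed

lemma compose_nth_minus_At_H_sum:
  fixes Hf A At :: "complex fps"
  assumes "r \<le> R" "\<alpha> \<ge> 1"
  shows "(Hf oo A) $ n - c * (\<Sum>l<r. At_H \<alpha> \<beta> \<gamma> At Hf A $ l * z ^ l)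
       = ((Hf oo A) $ n - (\<Sum>j<R. (fps_deriv Hf oo A) $ j * A $ (n - j)))
         + (\<Sum>j<R. (fps_deriv Hf oo A) $ j * (A $ (n - j) - c * (\<Sum>l<r. At_j \<alpha> \<beta> \<gamma> At j $ l * z ^ l)))"
proof -
  define S where "S j = (\<Sum>l<r. At_j \<alpha> \<beta> \<gamma> At j $ l * z ^ l)" for j
  have "c * (\<Sum>l<r. At_H \<alpha> \<beta> \<gamma> At Hf A $ l * z ^ l) = c * (\<Sum>j<R. (fps_deriv Hf oo A) $ j * S j)"
    unfolding S_def by (subst At_H_partial_sum[OF assms]) (rule refl)
  also have "\<dots> = (\<Sum>j<R. c * ((fps_deriv Hf oo A) $ j * S j))"
    by (rule sum_distrib_left)
  also have "\<dots> = (\<Sum>j<R. (fps_deriv Hf oo A) $ j * (c * S j))"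
    by (rule sum.cong[OF refl mult.left_commute])
  finally show ?thesis
    unfolding S_def right_diff_distrib sum_subtractf by simp
qed

lemma compose_asymp_remainder:
  fixes Hf A At :: "complex fps"
  assumes \<alpha>: "\<alpha> \<ge> 1" and \<beta>: "\<beta> > 0" and r: "r \<le> R"
    and approx: "eventually (\<lambda>n. norm ((Hf oo A) $ n - (\<Sum>j<R. (fps_deriv Hf oo A) $ j * A $ (n - j)))
                   \<le> C * (scale \<alpha> \<beta> \<gamma> n * (1 / real n) ^ r)) at_top"
    and shifted: "\<And>j. \<exists>C. eventually (\<lambda>n. norm (A $ (n - j) - of_real (scale \<alpha> \<beta> \<gamma> n) *
                   (\<Sum>l<r. At_j \<alpha> \<beta> \<gamma> At j $ l * (1 / of_nat n) ^ l)) \<le> C * (scale \<alpha> \<beta> \<gamma> n * (1 / real n) ^ r)) at_top"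
  shows "(\<lambda>n. norm ((Hf oo A) $ n - of_real (scale \<alpha> \<beta> \<gamma> n) * (\<Sum>l<r. At_H \<alpha> \<beta> \<gamma> At Hf A $ l * (1 / of_nat n) ^ l)))
           \<in> O(\<lambda>n. scale \<alpha> \<beta> \<gamma> n * (1 / real n) ^ r)"
proof -
  let ?s = "scale \<alpha> \<beta> \<gamma>"
  let ?d = "\<lambda>j. (fps_deriv Hf oo A) $ j"
  let ?D = "\<lambda>n j. A $ (n - j) - of_real (?s n) * (\<Sum>l<r. At_j \<alpha> \<beta> \<gamma> At j $ l * (1 / of_nat n) ^ l)"
  have "\<forall>j. \<exists>C. eventually (\<lambda>n. norm (?D n j) \<le> C * (?s n * (1 / real n) ^ r)) at_top"
    using shifted by blast
  then obtain Cj where "\<forall>j. eventually (\<lambda>n. norm (?D n j) \<le> Cj j * (?s n * (1 / real n) ^ r)) at_top"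
    by (rule choice[THEN exE]) blast
  then have "eventually (\<lambda>n. \<forall>j\<in>{..<R}. norm (?D n j) \<le> Cj j * (?s n * (1 / real n) ^ r)) at_top"
    by (simp add: eventually_ball_finite)
  then have "eventually (\<lambda>n. norm ((Hf oo A) $ n - of_real (?s n) * (\<Sum>l<r. At_H \<alpha> \<beta> \<gamma> At Hf A $ l * (1 / of_nat n) ^ l))
               \<le> (C + (\<Sum>j<R. norm (?d j) * Cj j)) * (?s n * (1 / real n) ^ r)) at_top"
    using approx
  proof eventually_elim
    case (elim n)
    let ?X = "?s n * (1 / real n) ^ r"
    have "norm ((Hf oo A) $ n - of_real (?s n) * (\<Sum>l<r. At_H \<alpha> \<beta> \<gamma> At Hf A $ l * (1 / of_nat n) ^ l))
          \<le> norm ((Hf oo A) $ n - (\<Sum>j<R. ?d j * A $ (n - j))) + (\<Sum>j<R. norm (?d j) * norm (?D n j))"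
      unfolding compose_nth_minus_At_H_sum[OF r \<alpha>]
      by (rule order_trans[OF norm_triangle_ineq add_left_mono]) (rule order_trans[OF norm_sum], simp add: norm_mult)
    also have "\<dots> \<le> C * ?X + (\<Sum>j<R. norm (?d j) * (Cj j * ?X))"
      using elim by (intro add_mono sum_mono mult_left_mono) auto
    also have "\<dots> = (C + (\<Sum>j<R. norm (?d j) * Cj j)) * ?X"
      by (simp only: sum_distrib_right mult.assoc distrib_right)
    finally show ?case .
  qed
  then show ?thesis
    by (intro bigoI[where c = "C + (\<Sum>j<R. norm (?d j) * Cj j)"])
       (auto elim!: eventually_mono simp: abs_mult scale_nonneg[OF \<beta>])
qed

theorem proposition12:
  fixes H :: "complex \<Rightarrow> complex" and A At :: "complex fps"
    and \<alpha> :: nat and \<beta> \<gamma> :: real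
  assumes "H analytic_on {0}"
    and "fps_nth A 0 = 0"
    and "\<alpha> > 0" and "\<beta> > 0" and "At \<noteq> 0"
    and "asymp_fps (fps_nth A) (scale \<alpha> \<beta> \<gamma>) At"
  shows "asymp_fps (fps_nth (fps_expansion H 0 oo A)) (scale \<alpha> \<beta> \<gamma>)
           (At_H \<alpha> \<beta> \<gamma> At (fps_expansion H 0) A)"
proof -
  note H = assms(1) and A_0 = assms(2) and \<beta> = assms(4) and A = assms(6)
  have \<alpha>: "\<alpha> \<ge> 1" using assms(3) by simp
  obtain K where K: "K > 0" "\<And>i. norm (A $ i) \<le> fact_majorant K (exp (real \<alpha>) * \<beta>) \<alpha> (nat \<lceil>\<gamma>\<rceil>) i"
    using asymp_fps_imp_le_fact_majorant[OF \<alpha> \<beta> A_0 A] by blast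
  have "fps_conv_radius (fps_expansion H 0) > 0"
    using analytic_at_imp_has_fps_expansion_0[OF H] by (simp add: has_fps_expansion_def)
  then obtain M w where M: "M > 0" "w \<ge> 1" "\<And>m. norm (fps_expansion H 0 $ m) \<le> M * w ^ m"
    using fps_nth_bound_geometric by blast
  show ?thesis
    unfolding asymp_fps_def
  proof
    fix r
    define s where "s = r + nat \<lceil>\<bar>\<gamma>\<bar>\<rceil>"
    have "real r - \<gamma> \<le> real s" unfolding s_def by linarith
    also have "\<dots> \<le> real (\<alpha> * s)" by (rule of_nat_mono) (use mult_le_mono1[OF \<alpha>, of s] in simp)
    finally obtain C where approx: "eventually (\<lambda>n. norm ((fps_expansion H 0 oo A) $ n
        - (\<Sum>j<nat \<lceil>\<gamma>\<rceil>+1+s. (fps_deriv (fps_expansion H 0) oo A) $ j * A $ (n - j)))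
        \<le> C * (scale \<alpha> \<beta> \<gamma> n * (1 / real n) ^ r)) at_top"
      using compose_nth_approx_on_scale[OF M(3,1,2) A_0 K(2) K(1) \<alpha> \<beta>] by blast
    have "r \<le> nat \<lceil>\<gamma>\<rceil> + 1 + s" by (simp add: s_def)
    then show "(\<lambda>n. norm ((fps_expansion H 0 oo A) $ n - of_real (scale \<alpha> \<beta> \<gamma> n) *
                 (\<Sum>l<r. At_H \<alpha> \<beta> \<gamma> At (fps_expansion H 0) A $ l * (1 / of_nat n) ^ l)))
               \<in> O(\<lambda>n. scale \<alpha> \<beta> \<gamma> n * (1 / real n) ^ r)"
      using approx by (rule compose_asymp_remainder[OF \<alpha> \<beta> _ _ asymp_fps_shifted[OF \<beta> A]])
  qed
qed

end
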